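(* Let $n\geq 3$ and let $\mathfrak{h}_{2n+1}=\mathfrak{g}_{-2}\oplus\mathfrak{g}_{-1}$ be the Heisenberg Lie algebra, where $\mathfrak{g}_{-2}$ is the one-dimensional centre and $[X,Y]=J(X\wedge Y)$ for $X,Y\in\mathfrak{g}_{-1}$ with $J:\Lambda^2\mathfrak{g}_{-1}\to\mathfrak{g}_{-2}$ a non-degenerate symplectic form. Let $\mathbb{V}$ be a representation of $\mathfrak{h}_{2n+1}$, and write $\eth_a$ for the action of $\mathfrak{g}_{-1}$ (so $Xv=X^a\eth_av$). Then for $r=0,1,2$ the Lie algebra cohomology $H^r(\mathfrak{h}_{2n+1},\mathbb{V})$ is isomorphic to the cohomology at the $r$-th term ($r=0$ being $\mathbb{V}$) of the complex $$0\to\mathbb{V}\xrightarrow{\partial}\mathrm{Hom}(\mathfrak{g}_{-1},\mathbb{V})\xrightarrow{\partial_\perp}\mathrm{Hom}(\Lambda^2_\perp\mathfrak{g}_{-1},\mathbb{V})\xrightarrow{\partial_\perp}\mathrm{Hom}(\Lambda^3_\perp\mathfrak{g}_{-1},\mathbb{V}),$$ where $\partial v=\eth_av$, $\partial_\perp v_a$ is the $J$-trace-free part of $\eth_{[a}v_{b]}$, and $\partial_\perp v_{ab}$ is the $J$-trace-free part of $\eth_{[a}v_{bc]}$.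
   Context: $\Lambda^k_\perp\mathfrak{g}_{-1}$ denotes the $k$-forms on $\mathfrak{g}_{-1}$ (i.e.\ elements of $\Lambda^k\mathfrak{g}_{-1}^*$, identified with $\mathrm{Hom}(\Lambda^k\mathfrak{g}_{-1},\cdot)$ via $\mathrm{Hom}(\Lambda^k_\perp\mathfrak{g}_{-1},\mathbb{V})=\Lambda^k_\perp\mathfrak{g}_{-1}^*\otimes\mathbb{V}$) that are trace-free with respect to the symplectic form, i.e.\ all contractions with the inverse symplectic form vanish; the trace-free part is the projection along the complement consisting of forms $J\wedge(\cdot)$. Lie algebra cohomology is computed by the usual Koszul (Chevalley--Eilenberg) complex $\Lambda^\bullet\mathfrak{h}_{2n+1}^*\otimes\mathbb{V}$. *)

theory Defs
  imports Complex_Main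
begin

text \<open>The Heisenberg algebra h_{2n+1} = g_{-2} + g_{-1} is taken with basis
  e_0,...,e_{2n-1} of g_{-1} and e_{2n} spanning the centre g_{-2}; the brackets are
  [e_a,e_b] = J a b e_{2n} for a,b < 2n, all others zero.  A representation on a real
  vector space 'v is given by the operators D a (the action of e_a, i.e. eth_a) and T
  (the action of e_{2n}).  V-valued k-forms (elements of Hom(Lambda^k,V)) are stored as
  functions on index lists, alternating, and zero off lists of length k with entries in range.\<close>

definition del :: "nat \<Rightarrow> 'b list \<Rightarrow> 'b list" where
  "del i xs = take i xs @ drop (Suc i) xs"

definition alt_form :: "nat \<Rightarrow> nat \<Rightarrow> (nat list \<Rightarrow> 'v::real_vector) \<Rightarrow> bool" where
  "alt_form N k \<omega> \<longleftrightarrow>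
     (\<forall>xs. (length xs \<noteq> k \<or> \<not> set xs \<subseteq> {..<N}) \<longrightarrow> \<omega> xs = 0) \<and>
     (\<forall>xs. \<not> distinct xs \<longrightarrow> \<omega> xs = 0) \<and>
     (\<forall>xs i j. i < length xs \<longrightarrow> j < length xs \<longrightarrow> i \<noteq> j \<longrightarrow>
         \<omega> (xs[i := xs ! j, j := xs ! i]) = - \<omega> xs)"

definition rho :: "nat \<Rightarrow> (nat \<Rightarrow> 'v \<Rightarrow> 'v) \<Rightarrow> ('v \<Rightarrow> 'v) \<Rightarrow> nat \<Rightarrow> 'v \<Rightarrow> 'v" where
  "rho n D T a = (if a < 2 * n then D a else T)"

definition Jh :: "nat \<Rightarrow> (nat \<Rightarrow> nat \<Rightarrow> real) \<Rightarrow> nat \<Rightarrow> nat \<Rightarrow> real" where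
  "Jh n J a b = (if a < 2 * n \<and> b < 2 * n then J a b else 0)"

definition ce_d :: "nat \<Rightarrow> (nat \<Rightarrow> nat \<Rightarrow> real) \<Rightarrow> (nat \<Rightarrow> 'v \<Rightarrow> 'v) \<Rightarrow> ('v \<Rightarrow> 'v)
    \<Rightarrow> (nat list \<Rightarrow> 'v::real_vector) \<Rightarrow> nat list \<Rightarrow> 'v" where
  "ce_d n J D T \<omega> xs =
     (if set xs \<subseteq> {..2 * n} then
        (\<Sum>i<length xs. ((-1::real) ^ i) *\<^sub>R rho n D T (xs ! i) (\<omega> (del i xs)))
      + (\<Sum>i<length xs. \<Sum>j<length xs. if i < j then
            ((-1::real) ^ (i + j) * Jh n J (xs ! i) (xs ! j)) *\<^sub>R \<omega> (2 * n # del i (del j xs))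
          else 0)
      else 0)"

definition ce_sp :: "nat \<Rightarrow> nat \<Rightarrow> (nat list \<Rightarrow> 'v::real_vector) set" where
  "ce_sp n r = {\<omega>. alt_form (Suc (2 * n)) r \<omega>}"

definition eth :: "nat \<Rightarrow> (nat \<Rightarrow> 'v \<Rightarrow> 'v) \<Rightarrow> (nat list \<Rightarrow> 'v::real_vector) \<Rightarrow> nat list \<Rightarrow> 'v" where
  "eth n D \<omega> xs =
     (if set xs \<subseteq> {..<2 * n} then
        (\<Sum>i<length xs. ((-1::real) ^ i) *\<^sub>R D (xs ! i) (\<omega> (del i xs)))
      else 0)"

definition jinv :: "nat \<Rightarrow> (nat \<Rightarrow> nat \<Rightarrow> real) \<Rightarrow> nat \<Rightarrow> nat \<Rightarrow> real" where
  "jinv n J = (THE M. (\<forall>a<2 * n. \<forall>c<2 * n. (\<Sum>b<2 * n. J a b * M b c) = (if a = c then 1 else 0))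
                   \<and> (\<forall>a b. (2 * n \<le> a \<or> 2 * n \<le> b) \<longrightarrow> M a b = 0))"

definition trace_free :: "nat \<Rightarrow> (nat \<Rightarrow> nat \<Rightarrow> real) \<Rightarrow> nat \<Rightarrow> (nat list \<Rightarrow> 'v::real_vector) \<Rightarrow> bool" where
  "trace_free n J k \<omega> \<longleftrightarrow>
     (\<forall>cs. length cs + 2 = k \<longrightarrow>
        (\<Sum>a<2 * n. \<Sum>b<2 * n. jinv n J a b *\<^sub>R \<omega> (a # b # cs)) = 0)"

definition jwedge :: "nat \<Rightarrow> (nat \<Rightarrow> nat \<Rightarrow> real) \<Rightarrow> (nat list \<Rightarrow> 'v::real_vector) \<Rightarrow> nat list \<Rightarrow> 'v" where
  "jwedge n J \<beta> xs =
     (if set xs \<subseteq> {..<2 * n} then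
        (\<Sum>i<length xs. \<Sum>j<length xs. if i < j then
            ((-1::real) ^ (i + j + 1) * J (xs ! i) (xs ! j)) *\<^sub>R \<beta> (del i (del j xs))
          else 0)
      else 0)"

definition tf_part :: "nat \<Rightarrow> (nat \<Rightarrow> nat \<Rightarrow> real) \<Rightarrow> nat \<Rightarrow> (nat list \<Rightarrow> 'v::real_vector) \<Rightarrow> nat list \<Rightarrow> 'v" where
  "tf_part n J k \<omega> = (THE \<tau>. alt_form (2 * n) k \<tau> \<and> trace_free n J k \<tau> \<and>
        (\<exists>\<beta>. alt_form (2 * n) (k - 2) \<beta> \<and> (\<forall>xs. \<omega> xs = \<tau> xs + jwedge n J \<beta> xs)))"

definition rsp :: "nat \<Rightarrow> (nat \<Rightarrow> nat \<Rightarrow> real) \<Rightarrow> nat \<Rightarrow> (nat list \<Rightarrow> 'v::real_vector) set" where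
  "rsp n J r = {\<omega>. alt_form (2 * n) r \<omega> \<and> trace_free n J r \<omega>}"

definition rd :: "nat \<Rightarrow> (nat \<Rightarrow> nat \<Rightarrow> real) \<Rightarrow> (nat \<Rightarrow> 'v \<Rightarrow> 'v) \<Rightarrow> nat
    \<Rightarrow> (nat list \<Rightarrow> 'v::real_vector) \<Rightarrow> nat list \<Rightarrow> 'v" where
  "rd n J D r \<omega> = (if r = 0 then eth n D \<omega> else tf_part n J (Suc r) (eth n D \<omega>))"

definition cyc :: "(nat \<Rightarrow> ('b \<Rightarrow> 'v::zero) set) \<Rightarrow> (nat \<Rightarrow> ('b \<Rightarrow> 'v) \<Rightarrow> 'b \<Rightarrow> 'v) \<Rightarrow> nat \<Rightarrow> ('b \<Rightarrow> 'v) set" where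
  "cyc S d r = {\<omega> \<in> S r. \<forall>xs. d r \<omega> xs = 0}"

definition bdry :: "(nat \<Rightarrow> ('b \<Rightarrow> 'v::zero) set) \<Rightarrow> (nat \<Rightarrow> ('b \<Rightarrow> 'v) \<Rightarrow> 'b \<Rightarrow> 'v) \<Rightarrow> nat \<Rightarrow> ('b \<Rightarrow> 'v) set" where
  "bdry S d r = (if r = 0 then {\<lambda>_. 0} else d (r - 1) ` S (r - 1))"

definition quot_iso :: "('b \<Rightarrow> 'v::real_vector) set \<Rightarrow> ('b \<Rightarrow> 'v) set \<Rightarrow> ('b \<Rightarrow> 'v) set \<Rightarrow> ('b \<Rightarrow> 'v) set \<Rightarrow> bool" where
  "quot_iso Z1 B1 Z2 B2 \<longleftrightarrow> (\<exists>f.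
      (\<forall>x\<in>Z1. \<forall>y\<in>Z1. f (\<lambda>i. x i + y i) = (\<lambda>i. f x i + f y i)) \<and>
      (\<forall>c. \<forall>x\<in>Z1. f (\<lambda>i. c *\<^sub>R x i) = (\<lambda>i. c *\<^sub>R f x i)) \<and>
      f ` Z1 \<subseteq> Z2 \<and> f ` B1 \<subseteq> B2 \<and>
      (\<forall>z\<in>Z2. \<exists>x\<in>Z1. (\<lambda>i. z i - f x i) \<in> B2) \<and>
      (\<forall>x\<in>Z1. f x \<in> B2 \<longrightarrow> x \<in> B1))"

end

theory Submission
  imports Defs "Jordan_Normal_Form.Determinant"
begin

text \<open>
  A Chevalley--Eilenberg cochain on the Heisenberg algebra is the pair of its restriction to
  \<open>g\<^sub>-\<^sub>1\<close> and its contraction with the central generator; a 1-cochain is thus a pair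
  \<open>(w, s)\<close> and a 2-cochain a pair \<open>(W, \<psi>)\<close>. Two facts about forms on \<open>g\<^sub>-\<^sub>1\<close> drive
  everything: the curvature identity \<open>\<eth>\<eth> = J \<and> T\<close>, and injectivity of \<open>J \<and> -\<close> on 1- and
  2-forms, which holds because contracting with the inverse of \<open>J\<close> multiplies by \<open>2 - 2n\<close>
  resp. \<open>4 - 2n\<close> (up to a trace term) and \<open>n \<ge> 3\<close>. They show that \<open>(w, s)\<close> is closed iff
  \<open>\<eth>w = J s\<close> and \<open>(W, \<psi>)\<close> is closed iff \<open>\<eth>W = J \<and> \<psi>\<close>; the other components of the
  cocycle equation follow. Hence restriction to \<open>g\<^sub>-\<^sub>1\<close>, followed in degree 2 by the
  projection to the \<open>J\<close>-trace-free part, induces the isomorphisms; a cocycle whose image is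
  exact is itself exact because its central component is again forced by the injectivity.
\<close>

definition form0 :: "'v::zero \<Rightarrow> nat list \<Rightarrow> 'v" where
  "form0 v xs = (if xs = [] then v else 0)"

definition form1 :: "nat \<Rightarrow> (nat \<Rightarrow> 'v::zero) \<Rightarrow> nat list \<Rightarrow> 'v" where
  "form1 N g xs = (case xs of [a] \<Rightarrow> if a < N then g a else 0 | _ \<Rightarrow> 0)"

definition form2 :: "nat \<Rightarrow> (nat \<Rightarrow> nat \<Rightarrow> 'v::zero) \<Rightarrow> nat list \<Rightarrow> 'v" where
  "form2 N g xs = (case xs of [a, b] \<Rightarrow> if a < N \<and> b < N then g a b else 0 | _ \<Rightarrow> 0)"

definition form3 :: "nat \<Rightarrow> (nat \<Rightarrow> nat \<Rightarrow> nat \<Rightarrow> 'v::zero) \<Rightarrow> nat list \<Rightarrow> 'v" where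
  "form3 N g xs = (case xs of [a, b, c] \<Rightarrow> if a < N \<and> b < N \<and> c < N then g a b c else 0 | _ \<Rightarrow> 0)"

lemma form_simps [simp]:
  "form0 v [] = v"
  "form1 N g [a] = (if a < N then g a else 0)"
  "form2 N h [a, b] = (if a < N \<and> b < N then h a b else 0)"
  "form3 N k [a, b, c] = (if a < N \<and> b < N \<and> c < N then k a b c else 0)"
  by (simp_all add: form0_def form1_def form2_def form3_def)

lemma form_vanish:
  "xs \<noteq> [] \<Longrightarrow> form0 v xs = 0"
  "length xs \<noteq> 1 \<or> \<not> set xs \<subseteq> {..<N} \<Longrightarrow> form1 N g xs = 0"
  "length xs \<noteq> 2 \<or> \<not> set xs \<subseteq> {..<N} \<Longrightarrow> form2 N h xs = 0"
  "length xs \<noteq> 3 \<or> \<not> set xs \<subseteq> {..<N} \<Longrightarrow> form3 N k xs = 0"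
  by (auto simp: form0_def form1_def form2_def form3_def split: list.split)

lemma form0_eqI: "(\<And>xs. xs \<noteq> [] \<Longrightarrow> F xs = 0) \<Longrightarrow> F = form0 (F [])"
  by (auto simp: fun_eq_iff form0_def)

lemma form1_eqI:
  assumes "\<And>a. a < N \<Longrightarrow> F [a] = g a" "\<And>xs. length xs \<noteq> 1 \<or> \<not> set xs \<subseteq> {..<N} \<Longrightarrow> F xs = 0"
  shows "F = form1 N g"
  by (auto simp: fun_eq_iff form1_def assms split: list.split)

lemma form2_eqI:
  assumes "\<And>a b. a < N \<Longrightarrow> b < N \<Longrightarrow> F [a, b] = g a b"
    "\<And>xs. length xs \<noteq> 2 \<or> \<not> set xs \<subseteq> {..<N} \<Longrightarrow> F xs = 0"
  shows "F = form2 N g"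
  by (auto simp: fun_eq_iff form2_def assms split: list.split)

lemma form3_eqI:
  assumes "\<And>a b c. a < N \<Longrightarrow> b < N \<Longrightarrow> c < N \<Longrightarrow> F [a, b, c] = g a b c"
    "\<And>xs. length xs \<noteq> 3 \<or> \<not> set xs \<subseteq> {..<N} \<Longrightarrow> F xs = 0"
  shows "F = form3 N g"
  by (auto simp: fun_eq_iff form3_def assms split: list.split)

lemma form1_eq_iff: "form1 N g = form1 N h \<longleftrightarrow> (\<forall>a<N. g a = h a)"
  by (auto simp: fun_eq_iff form1_def split: list.split)

lemma form2_eq_iff: "form2 N g = form2 N h \<longleftrightarrow> (\<forall>a<N. \<forall>b<N. g a b = h a b)"
  by (auto simp: fun_eq_iff form2_def split: list.split)

lemma form3_eq_iff: "form3 N g = form3 N h \<longleftrightarrow> (\<forall>a<N. \<forall>b<N. \<forall>c<N. g a b c = h a b c)"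
  by (auto simp: fun_eq_iff form3_def split: list.split)

lemma form_zero:
  "form1 N (\<lambda>_. 0) = (\<lambda>_. 0)" "form2 N (\<lambda>_ _. 0) = (\<lambda>_. 0)" "form3 N (\<lambda>_ _ _. 0) = (\<lambda>_. 0)"
  by (auto simp: fun_eq_iff form1_def form2_def form3_def split: list.split)

lemma
  fixes g h :: "nat \<Rightarrow> 'v::real_vector" and g' h' :: "nat \<Rightarrow> nat \<Rightarrow> 'v"
  shows form1_add: "form1 N (\<lambda>a. g a + h a) = (\<lambda>xs. form1 N g xs + form1 N h xs)"
    and form1_scale: "form1 N (\<lambda>a. r *\<^sub>R g a) = (\<lambda>xs. r *\<^sub>R form1 N g xs)"
    and form2_add: "form2 N (\<lambda>a b. g' a b + h' a b) = (\<lambda>xs. form2 N g' xs + form2 N h' xs)"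
    and form2_diff: "form2 N (\<lambda>a b. g' a b - h' a b) = (\<lambda>xs. form2 N g' xs - form2 N h' xs)"
    and form2_scale: "form2 N (\<lambda>a b. r *\<^sub>R g' a b) = (\<lambda>xs. r *\<^sub>R form2 N g' xs)"
  by (auto simp: fun_eq_iff form1_def form2_def split: list.split)

lemma self_eq_neg_iff: "(x::'v::real_vector) = - x \<longleftrightarrow> x = 0"
proof
  assume "x = - x"
  then have "(2::real) *\<^sub>R x = 0" by (metis add.right_inverse scaleR_2)
  then show "x = 0" by simp
qed simp

lemma alt_form_vanish: "alt_form N k \<omega> \<Longrightarrow> length xs \<noteq> k \<or> \<not> set xs \<subseteq> {..<N} \<Longrightarrow> \<omega> xs = 0"
  by (simp add: alt_form_def)

lemma alt_form_swap:
  "alt_form N k \<omega> \<Longrightarrow> i < length xs \<Longrightarrow> j < length xs \<Longrightarrow> i \<noteq> j \<Longrightarrow> \<omega> (xs[i := xs ! j, j := xs ! i]) = - \<omega> xs"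
  by (simp add: alt_form_def)

lemma alt_form_0_eq: "alt_form N 0 \<omega> \<Longrightarrow> \<omega> = form0 (\<omega> [])"
  by (rule form0_eqI) (simp add: alt_form_vanish)

lemma alt_form_1_eq: "alt_form N 1 \<omega> \<Longrightarrow> \<omega> = form1 N (\<lambda>a. \<omega> [a])"
  by (rule form1_eqI) (simp_all add: alt_form_vanish)

lemma alt_form_2_eq: "alt_form N 2 \<omega> \<Longrightarrow> \<omega> = form2 N (\<lambda>a b. \<omega> [a, b])"
  by (rule form2_eqI) (simp_all add: alt_form_vanish)

lemma alt_form_3_eq: "alt_form N 3 \<omega> \<Longrightarrow> \<omega> = form3 N (\<lambda>a b c. \<omega> [a, b, c])"
  by (rule form3_eqI) (simp_all add: alt_form_vanish)

lemma alt_form_2_antisym: "alt_form N 2 \<omega> \<Longrightarrow> \<omega> [a, b] = - \<omega> [b, a]"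
  using alt_form_swap[of N 2 \<omega> 0 "[b, a]" 1] by simp

lemma alt_form_3_antisym:
  assumes "alt_form N 3 \<omega>"
  shows "\<omega> [a, b, c] = - \<omega> [b, a, c]" "\<omega> [a, b, c] = - \<omega> [a, c, b]" "\<omega> [a, b, c] = - \<omega> [c, b, a]"
  using alt_form_swap[OF assms, of 0 "[b, a, c]" 1] alt_form_swap[OF assms, of 1 "[a, c, b]" 2]
    alt_form_swap[OF assms, of 0 "[c, b, a]" 2]
  by simp_all

lemma alt_form_form0: "alt_form N 0 (form0 v)"
  by (auto simp: alt_form_def form0_def)

lemma alt_forms_0: "{\<omega>. alt_form N 0 \<omega>} = range form0"
proof
  show "{\<omega>. alt_form N 0 \<omega>} \<subseteq> range form0"
    using alt_form_0_eq by blast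
qed (use alt_form_form0 in blast)

lemma alt_form_form1: "alt_form N 1 (form1 N g)"
  unfolding alt_form_def
proof (intro conjI allI impI)
  fix xs :: "nat list"
  show "length xs \<noteq> 1 \<or> \<not> set xs \<subseteq> {..<N} \<Longrightarrow> form1 N g xs = 0" by (rule form_vanish)
  show "form1 N g xs = 0" if "\<not> distinct xs"
    using that by (intro form_vanish(2)) (auto simp: length_Suc_conv)
  fix i j assume "i < length xs" "j < length xs" "i \<noteq> j"
  then have "length xs \<noteq> 1" by auto
  then show "form1 N g (xs[i := xs ! j, j := xs ! i]) = - form1 N g xs" by (simp add: form_vanish)
qed

lemma alt_form_form2:
  assumes anti: "\<And>a b. a < N \<Longrightarrow> b < N \<Longrightarrow> g a b = - g b a"
  shows "alt_form N 2 (form2 N g)"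
  unfolding alt_form_def
proof (intro conjI allI impI)
  fix xs :: "nat list"
  show "length xs \<noteq> 2 \<or> \<not> set xs \<subseteq> {..<N} \<Longrightarrow> form2 N g xs = 0" by (rule form_vanish)
  show "form2 N g xs = 0" if "\<not> distinct xs"
  proof (cases "length xs = 2")
    case True
    then obtain a b where "xs = [a, b]" by (auto simp: length_Suc_conv numeral_2_eq_2)
    with that anti[of a a] show ?thesis by (auto simp: self_eq_neg_iff)
  qed (simp add: form_vanish)
  fix i j assume ij: "i < length xs" "j < length xs" "i \<noteq> j"
  show "form2 N g (xs[i := xs ! j, j := xs ! i]) = - form2 N g xs"
  proof (cases "length xs = 2")
    case True
    then obtain a b where "xs = [a, b]" by (auto simp: length_Suc_conv numeral_2_eq_2)
    with ij anti[of a b] show ?thesis by (auto simp: less_Suc_eq numeral_2_eq_2)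
  qed (simp add: form_vanish)
qed

lemma alt_form_form3:
  assumes anti: "\<And>a b c. a < N \<Longrightarrow> b < N \<Longrightarrow> c < N \<Longrightarrow> g a b c = - g b a c"
    "\<And>a b c. a < N \<Longrightarrow> b < N \<Longrightarrow> c < N \<Longrightarrow> g a b c = - g a c b"
    "\<And>a b c. a < N \<Longrightarrow> b < N \<Longrightarrow> c < N \<Longrightarrow> g a b c = - g c b a"
  shows "alt_form N 3 (form3 N g)"
  unfolding alt_form_def
proof (intro conjI allI impI)
  fix xs :: "nat list"
  show "length xs \<noteq> 3 \<or> \<not> set xs \<subseteq> {..<N} \<Longrightarrow> form3 N g xs = 0" by (rule form_vanish)
  show "form3 N g xs = 0" if "\<not> distinct xs"
  proof (cases "length xs = 3")
    case True
    then obtain a b c where "xs = [a, b, c]" by (auto simp: length_Suc_conv numeral_3_eq_3)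
    with that anti(1)[of a a c] anti(2)[of a b b] anti(3)[of a b a] show ?thesis
      by (auto simp: self_eq_neg_iff)
  qed (simp add: form_vanish)
  fix i j assume ij: "i < length xs" "j < length xs" "i \<noteq> j"
  show "form3 N g (xs[i := xs ! j, j := xs ! i]) = - form3 N g xs"
  proof (cases "length xs = 3")
    case True
    then obtain a b c where "xs = [a, b, c]" by (auto simp: length_Suc_conv numeral_3_eq_3)
    with ij anti(1)[of a b c] anti(2)[of a b c] anti(3)[of a b c] show ?thesis
      by (auto simp: less_Suc_eq numeral_3_eq_3)
  qed (simp add: form_vanish)
qed

lemma alt_form_add: "alt_form N k \<omega> \<Longrightarrow> alt_form N k \<eta> \<Longrightarrow> alt_form N k (\<lambda>xs. \<omega> xs + \<eta> xs)"
  and alt_form_diff: "alt_form N k \<omega> \<Longrightarrow> alt_form N k \<eta> \<Longrightarrow> alt_form N k (\<lambda>xs. \<omega> xs - \<eta> xs)"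
  and alt_form_scale: "alt_form N k \<omega> \<Longrightarrow> alt_form N k (\<lambda>xs. r *\<^sub>R \<omega> xs)"
  and alt_form_zero: "alt_form N k (\<lambda>_. 0)"
  by (auto simp: alt_form_def)

definition eth1 :: "(nat \<Rightarrow> 'v \<Rightarrow> 'v) \<Rightarrow> (nat \<Rightarrow> 'v) \<Rightarrow> nat \<Rightarrow> nat \<Rightarrow> 'v::real_vector" where
  "eth1 D w a b = D a (w b) - D b (w a)"

definition eth2 :: "(nat \<Rightarrow> 'v \<Rightarrow> 'v) \<Rightarrow> (nat \<Rightarrow> nat \<Rightarrow> 'v) \<Rightarrow> nat \<Rightarrow> nat \<Rightarrow> nat \<Rightarrow> 'v::real_vector" where
  "eth2 D W a b c = D a (W b c) - D b (W a c) + D c (W a b)"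

definition eth3 :: "(nat \<Rightarrow> 'v \<Rightarrow> 'v) \<Rightarrow> (nat \<Rightarrow> nat \<Rightarrow> nat \<Rightarrow> 'v) \<Rightarrow> nat \<Rightarrow> nat \<Rightarrow> nat \<Rightarrow> nat \<Rightarrow> 'v::real_vector" where
  "eth3 D X a b c d = D a (X b c d) - D b (X a c d) + D c (X a b d) - D d (X a b c)"

definition jwedge1 :: "(nat \<Rightarrow> nat \<Rightarrow> real) \<Rightarrow> (nat \<Rightarrow> 'v) \<Rightarrow> nat \<Rightarrow> nat \<Rightarrow> nat \<Rightarrow> 'v::real_vector" where
  "jwedge1 J u a b c = J a b *\<^sub>R u c - J a c *\<^sub>R u b + J b c *\<^sub>R u a"

definition jwedge2 :: "(nat \<Rightarrow> nat \<Rightarrow> real) \<Rightarrow> (nat \<Rightarrow> nat \<Rightarrow> 'v) \<Rightarrow> nat \<Rightarrow> nat \<Rightarrow> nat \<Rightarrow> nat \<Rightarrow> 'v::real_vector" where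
  "jwedge2 J g a b c d =
     J a b *\<^sub>R g c d - J a c *\<^sub>R g b d + J a d *\<^sub>R g b c + J b c *\<^sub>R g a d - J b d *\<^sub>R g a c + J c d *\<^sub>R g a b"

lemma jwedge1_diff: "jwedge1 J (\<lambda>c. u c - v c) a b c = jwedge1 J u a b c - jwedge1 J v a b c"
  by (simp add: jwedge1_def algebra_simps)

lemma jwedge2_diff: "jwedge2 J (\<lambda>a b. g a b - h a b) a b c d = jwedge2 J g a b c d - jwedge2 J h a b c d"
  by (simp add: jwedge2_def algebra_simps)

lemma jwedge1_add: "jwedge1 J (\<lambda>c. u c + v c) a b c = jwedge1 J u a b c + jwedge1 J v a b c"
  by (simp add: jwedge1_def algebra_simps)

lemma length_del: "i < length xs \<Longrightarrow> length (del i xs) = length xs - 1"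
  by (simp add: del_def)

lemma eth_eval:
  "a < 2 * n \<Longrightarrow> eth n D \<omega> [a] = D a (\<omega> [])"
  "a < 2 * n \<Longrightarrow> b < 2 * n \<Longrightarrow> eth n D \<omega> [a, b] = D a (\<omega> [b]) - D b (\<omega> [a])"
  "a < 2 * n \<Longrightarrow> b < 2 * n \<Longrightarrow> c < 2 * n \<Longrightarrow>
     eth n D \<omega> [a, b, c] = D a (\<omega> [b, c]) - D b (\<omega> [a, c]) + D c (\<omega> [a, b])"
  by (simp_all add: eth_def del_def numeral_2_eq_2 numeral_3_eq_3 lessThan_Suc)

lemma jwedge_eval:
  "a < 2 * n \<Longrightarrow> b < 2 * n \<Longrightarrow> jwedge n J \<beta> [a, b] = J a b *\<^sub>R \<beta> []"
  "a < 2 * n \<Longrightarrow> b < 2 * n \<Longrightarrow> c < 2 * n \<Longrightarrow>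
     jwedge n J \<beta> [a, b, c] = J a b *\<^sub>R \<beta> [c] - J a c *\<^sub>R \<beta> [b] + J b c *\<^sub>R \<beta> [a]"
  by (simp_all add: jwedge_def del_def numeral_2_eq_2 numeral_3_eq_3 lessThan_Suc)

lemma ce_d_eval:
  "x \<le> 2 * n \<Longrightarrow> ce_d n J D T \<omega> [x] = rho n D T x (\<omega> [])"
  "x \<le> 2 * n \<Longrightarrow> y \<le> 2 * n \<Longrightarrow>
     ce_d n J D T \<omega> [x, y] = rho n D T x (\<omega> [y]) - rho n D T y (\<omega> [x]) - Jh n J x y *\<^sub>R \<omega> [2 * n]"
  "x \<le> 2 * n \<Longrightarrow> y \<le> 2 * n \<Longrightarrow> z \<le> 2 * n \<Longrightarrow>
     ce_d n J D T \<omega> [x, y, z] = rho n D T x (\<omega> [y, z]) - rho n D T y (\<omega> [x, z]) + rho n D T z (\<omega> [x, y])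
       - Jh n J x y *\<^sub>R \<omega> [2 * n, z] + Jh n J x z *\<^sub>R \<omega> [2 * n, y] - Jh n J y z *\<^sub>R \<omega> [2 * n, x]"
  by (simp_all add: ce_d_def del_def numeral_2_eq_2 numeral_3_eq_3 lessThan_Suc)

lemma eth_vanish:
  assumes "\<And>a. a < 2 * n \<Longrightarrow> D a 0 = 0" and "\<And>ys. length ys \<noteq> k \<Longrightarrow> \<omega> ys = 0"
    and "length xs \<noteq> Suc k \<or> \<not> set xs \<subseteq> {..<2 * n}"
  shows "eth n D \<omega> xs = 0"
proof (cases "set xs \<subseteq> {..<2 * n}")
  case True
  then have "xs ! i < 2 * n" if "i < length xs" for i
    using that nth_mem by blast
  with True assms show ?thesis
    by (auto simp: eth_def length_del intro!: sum.neutral)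
qed (simp add: eth_def)

lemma jwedge_vanish:
  assumes "\<And>ys. length ys \<noteq> k \<Longrightarrow> \<beta> ys = 0" and "length xs \<noteq> k + 2 \<or> \<not> set xs \<subseteq> {..<2 * n}"
  shows "jwedge n J \<beta> xs = 0"
  using assms by (auto simp: jwedge_def length_del intro!: sum.neutral)

lemma ce_d_vanish:
  assumes "\<And>x. x \<le> 2 * n \<Longrightarrow> rho n D T x 0 = 0" and "\<And>ys. length ys \<noteq> k \<Longrightarrow> \<omega> ys = 0"
    and "length xs \<noteq> Suc k \<or> \<not> set xs \<subseteq> {..<Suc (2 * n)}"
  shows "ce_d n J D T \<omega> xs = 0"
proof (cases "set xs \<subseteq> {..2 * n}")
  case True
  then have "xs ! i \<le> 2 * n" if "i < length xs" for i
    using that nth_mem by blast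
  with True assms show ?thesis
    by (auto simp: ce_d_def length_del lessThan_Suc_atMost intro!: sum.neutral)
qed (simp add: ce_d_def)

lemma jwedge_form0: "jwedge n J (form0 s) = form2 (2 * n) (\<lambda>a b. J a b *\<^sub>R s)"
  by (rule form2_eqI) (auto simp: jwedge_eval intro: jwedge_vanish[where k=0] form_vanish)

lemma jwedge_form1: "jwedge n J (form1 (2 * n) u) = form3 (2 * n) (jwedge1 J u)"
  by (rule form3_eqI) (auto simp: jwedge_eval jwedge1_def intro: jwedge_vanish[where k=1] form_vanish)

lemma jwedge_lincomb:
  fixes \<beta> \<gamma> :: "nat list \<Rightarrow> 'v::real_vector"
  shows "jwedge n J (\<lambda>xs. r *\<^sub>R \<beta> xs + s *\<^sub>R \<gamma> xs) = (\<lambda>xs. r *\<^sub>R jwedge n J \<beta> xs + s *\<^sub>R jwedge n J \<gamma> xs)"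
proof -
  have summand: "(if P then x *\<^sub>R (r *\<^sub>R b + s *\<^sub>R g) else 0)
      = r *\<^sub>R (if P then x *\<^sub>R b else 0) + s *\<^sub>R (if P then x *\<^sub>R g else (0::'v))" for P x b g
    by (simp add: algebra_simps)
  show ?thesis
    by (simp add: fun_eq_iff jwedge_def summand sum.distrib scaleR_sum_right)
qed

lemma
  fixes \<beta> \<gamma> :: "nat list \<Rightarrow> 'v::real_vector"
  shows jwedge_add: "jwedge n J (\<lambda>xs. \<beta> xs + \<gamma> xs) = (\<lambda>xs. jwedge n J \<beta> xs + jwedge n J \<gamma> xs)"
    and jwedge_diff: "jwedge n J (\<lambda>xs. \<beta> xs - \<gamma> xs) = (\<lambda>xs. jwedge n J \<beta> xs - jwedge n J \<gamma> xs)"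
    and jwedge_scale: "jwedge n J (\<lambda>xs. r *\<^sub>R \<beta> xs) = (\<lambda>xs. r *\<^sub>R jwedge n J \<beta> xs)"
    and jwedge_zero: "jwedge n J (\<lambda>_. 0 :: 'v) = (\<lambda>_. 0)"
  using jwedge_lincomb[of n J 1 \<beta> 1 \<gamma>] jwedge_lincomb[of n J 1 \<beta> "-1" \<gamma>]
    jwedge_lincomb[of n J r \<beta> 0 \<gamma>] jwedge_lincomb[of n J 0 \<beta> 0 \<gamma>]
  by simp_all

section \<open>Cochains of the Heisenberg algebra\<close>

text \<open>The index \<open>N = 2n\<close> stands for the central generator: \<open>cochain1 N w s\<close> has restriction \<open>w\<close>
  and central value \<open>s\<close>, and \<open>cochain2 N W \<psi>\<close> has restriction \<open>W\<close> and contraction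
  \<open>\<psi> b = \<omega> [N, b]\<close> with the centre.\<close>

definition cochain1 :: "nat \<Rightarrow> (nat \<Rightarrow> 'v) \<Rightarrow> 'v \<Rightarrow> nat list \<Rightarrow> 'v::zero" where
  "cochain1 N w s = form1 (Suc N) (\<lambda>a. if a < N then w a else s)"

definition cochain2 :: "nat \<Rightarrow> (nat \<Rightarrow> nat \<Rightarrow> 'v) \<Rightarrow> (nat \<Rightarrow> 'v) \<Rightarrow> nat list \<Rightarrow> 'v::real_vector" where
  "cochain2 N W \<psi> = form2 (Suc N)
     (\<lambda>a b. if a < N \<and> b < N then W a b else if a < N then - \<psi> a else if b < N then \<psi> b else 0)"

lemma cochain1_simps [simp]:
  "a < N \<Longrightarrow> cochain1 N w s [a] = w a" "cochain1 N w s [N] = s"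
  by (simp_all add: cochain1_def)

lemma cochain2_simps [simp]:
  "a < N \<Longrightarrow> b < N \<Longrightarrow> cochain2 N W \<psi> [a, b] = W a b"
  "a < N \<Longrightarrow> cochain2 N W \<psi> [a, N] = - \<psi> a"
  "b < N \<Longrightarrow> cochain2 N W \<psi> [N, b] = \<psi> b"
  "cochain2 N W \<psi> [N, N] = 0"
  by (simp_all add: cochain2_def)

lemma cochain1_eq_iff: "cochain1 N w s = cochain1 N w' s' \<longleftrightarrow> (\<forall>a<N. w a = w' a) \<and> s = s'"
  by (auto simp: cochain1_def form1_eq_iff less_Suc_eq)

lemma cochain2_eq_iff:
  "cochain2 N W \<psi> = cochain2 N W' \<psi>' \<longleftrightarrow> (\<forall>a<N. \<forall>b<N. W a b = W' a b) \<and> (\<forall>a<N. \<psi> a = \<psi>' a)"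
  by (auto simp: cochain2_def form2_eq_iff less_Suc_eq)

lemma alt_form_cochain1: "alt_form (Suc N) 1 (cochain1 N w s)"
  unfolding cochain1_def by (rule alt_form_form1)

lemma cochain2_eq_0_iff:
  "cochain2 N W \<psi> = (\<lambda>_. 0) \<longleftrightarrow> (\<forall>a<N. \<forall>b<N. W a b = 0) \<and> (\<forall>a<N. \<psi> a = 0)"
proof -
  have "cochain2 N (\<lambda>_ _. 0) (\<lambda>_. 0) = ((\<lambda>_. 0) :: nat list \<Rightarrow> 'a::real_vector)"
    by (simp add: cochain2_def form_zero cong: if_cong)
  then show ?thesis
    using cochain2_eq_iff[of N W \<psi> "\<lambda>_ _. 0" "\<lambda>_. 0"] by simp
qed

lemma all_lists_length_1: "(\<forall>xs. length xs = Suc 0 \<longrightarrow> set xs \<subseteq> A \<longrightarrow> P xs) \<longleftrightarrow> (\<forall>x\<in>A. P [x])"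
  by (auto simp: length_Suc_conv)

lemma all_lists_length_3:
  "(\<forall>xs. length xs = 3 \<longrightarrow> set xs \<subseteq> A \<longrightarrow> P xs) \<longleftrightarrow> (\<forall>x\<in>A. \<forall>y\<in>A. \<forall>z\<in>A. P [x, y, z])"
  by (auto simp: length_Suc_conv numeral_3_eq_3)

lemma alt_form_cochain2:
  assumes "\<And>a b. a < N \<Longrightarrow> b < N \<Longrightarrow> W a b = - W b a"
  shows "alt_form (Suc N) 2 (cochain2 N W \<psi>)"
  unfolding cochain2_def
proof (rule alt_form_form2)
  fix a b assume "a < Suc N" "b < Suc N"
  then show "(if a < N \<and> b < N then W a b else if a < N then - \<psi> a else if b < N then \<psi> b else 0)
      = - (if b < N \<and> a < N then W b a else if b < N then - \<psi> b else if a < N then \<psi> a else 0)"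
    using assms[of a b] by (cases "a < N \<and> b < N") (auto simp: less_Suc_eq)
qed

lemma alt_form_1_cochain1: "alt_form (Suc N) 1 \<omega> \<Longrightarrow> \<omega> = cochain1 N (\<lambda>a. \<omega> [a]) (\<omega> [N])"
  by (subst alt_form_1_eq) (auto simp: cochain1_def form1_eq_iff less_Suc_eq)

lemma alt_form_2_cochain2:
  assumes alt: "alt_form (Suc N) 2 \<omega>"
  shows "\<omega> = cochain2 N (\<lambda>a b. \<omega> [a, b]) (\<lambda>b. \<omega> [N, b])"
proof -
  have "\<omega> [a, N] = - \<omega> [N, a]" if "a < N" for a
    using alt_form_2_antisym[OF alt] .
  moreover have "\<omega> [N, N] = 0"
    using alt_form_2_antisym[OF alt, of N N] by (simp add: self_eq_neg_iff)
  ultimately show ?thesis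
    by (subst alt_form_2_eq[OF alt]) (auto simp: cochain2_def form2_eq_iff less_Suc_eq)
qed

definition restrict1 :: "nat \<Rightarrow> (nat list \<Rightarrow> 'v) \<Rightarrow> nat list \<Rightarrow> 'v::zero" where
  "restrict1 N \<omega> = form1 N (\<lambda>a. \<omega> [a])"

definition restrict2 :: "nat \<Rightarrow> (nat list \<Rightarrow> 'v) \<Rightarrow> nat list \<Rightarrow> 'v::zero" where
  "restrict2 N \<omega> = form2 N (\<lambda>a b. \<omega> [a, b])"

lemma restrict1_cochain1: "restrict1 N (cochain1 N w s) = form1 N w"
  by (simp add: restrict1_def form1_eq_iff)

lemma restrict2_cochain2: "restrict2 N (cochain2 N W \<psi>) = form2 N W"
  by (simp add: restrict2_def form2_eq_iff)

section \<open>The inverse symplectic form\<close>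

lemma right_inverse_eq_left_inverse:
  fixes L R J :: "nat \<Rightarrow> nat \<Rightarrow> real"
  assumes left: "\<forall>a<N. \<forall>c<N. (\<Sum>b<N. L a b * J b c) = (if a = c then 1 else 0)"
    and right: "\<forall>a<N. \<forall>c<N. (\<Sum>b<N. J a b * R b c) = (if a = c then 1 else 0)"
    and "\<forall>a b. N \<le> a \<or> N \<le> b \<longrightarrow> L a b = 0" "\<forall>a b. N \<le> a \<or> N \<le> b \<longrightarrow> R a b = 0"
  shows "R = L"
proof (intro ext)
  fix a c
  show "R a c = L a c"
  proof (cases "a < N \<and> c < N")
    case True
    then have "R a c = (\<Sum>b<N. (if a = b then 1 else 0) * R b c)"
      by (simp add: if_distrib[of "\<lambda>x. x * _"] cong: if_cong)
    also have "\<dots> = (\<Sum>b<N. (\<Sum>d<N. L a d * J d b) * R b c)"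
      using left True by simp
    also have "\<dots> = (\<Sum>d<N. L a d * (\<Sum>b<N. J d b * R b c))"
      by (simp add: sum_distrib_left sum_distrib_right mult.assoc) (rule sum.swap)
    also have "\<dots> = (\<Sum>d<N. L a d * (if d = c then 1 else 0))"
      using right True by simp
    also have "\<dots> = L a c"
      using True by (simp add: if_distrib[of "\<lambda>x. _ * x"] cong: if_cong)
    finally show ?thesis .
  qed (use assms(3,4) in auto)
qed

lemma det_nondegenerate:
  fixes J :: "nat \<Rightarrow> nat \<Rightarrow> real"
  assumes skew: "\<forall>a<N. \<forall>b<N. J a b = - J b a"
    and nondeg: "\<forall>x :: nat \<Rightarrow> real. (\<forall>b<N. (\<Sum>a<N. x a * J a b) = 0) \<longrightarrow> (\<forall>a<N. x a = 0)"
  shows "det (mat N N (\<lambda>(i, j). J i j)) \<noteq> 0"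
proof
  define A where "A = mat N N (\<lambda>(i, j). J i j)"
  assume "det (mat N N (\<lambda>(i, j). J i j)) = 0"
  then obtain v where v: "v \<in> carrier_vec N" "v \<noteq> 0\<^sub>v N" "A *\<^sub>v v = 0\<^sub>v N"
    using det_0_iff_vec_prod_zero_field[of A N] unfolding A_def by auto
  have "(\<Sum>a<N. v $ a * J a b) = 0" if b: "b < N" for b
  proof -
    have "0 = (A *\<^sub>v v) $ b"
      using v b by simp
    also have "\<dots> = (\<Sum>a<N. J b a * v $ a)"
      using b v(1) unfolding A_def by (simp add: scalar_prod_def atLeast0LessThan)
    also have "\<dots> = (\<Sum>a<N. - (v $ a * J a b))"
    proof (rule sum.cong)
      fix a assume "a \<in> {..<N}"
      with b show "J b a * v $ a = - (v $ a * J a b)"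
        using skew[rule_format, of b a] by simp
    qed simp
    finally show ?thesis
      by (simp add: sum_negf)
  qed
  then have "v = 0\<^sub>v N"
    using nondeg v(1) by (intro eq_vecI) auto
  with v show False
    by simp
qed

lemma nondegenerate_inverse:
  fixes J :: "nat \<Rightarrow> nat \<Rightarrow> real"
  assumes "\<forall>a<N. \<forall>b<N. J a b = - J b a"
    and "\<forall>x :: nat \<Rightarrow> real. (\<forall>b<N. (\<Sum>a<N. x a * J a b) = 0) \<longrightarrow> (\<forall>a<N. x a = 0)"
  obtains M where "\<forall>a<N. \<forall>c<N. (\<Sum>b<N. J a b * M b c) = (if a = c then 1 else 0)"
    "\<forall>a<N. \<forall>c<N. (\<Sum>b<N. M a b * J b c) = (if a = c then 1 else 0)"
    "\<forall>a b. N \<le> a \<or> N \<le> b \<longrightarrow> M a b = 0"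
proof -
  define A where "A = mat N N (\<lambda>(i, j). J i j)"
  have A: "A \<in> carrier_mat N N"
    unfolding A_def by simp
  obtain B where B: "B \<in> carrier_mat N N" "B * A = 1\<^sub>m N"
    using det_non_zero_imp_unit[OF A det_nondegenerate[OF assms, folded A_def], of "()"]
    unfolding Units_def ring_mat_def by auto
  then have AB: "A * B = 1\<^sub>m N"
    using mat_mult_left_right_inverse[OF B(1) A B(2)] by blast
  define M where "M a b = (if a < N \<and> b < N then B $$ (a, b) else 0)" for a b
  have "(A * B) $$ (a, c) = (\<Sum>b<N. J a b * M b c)" "(B * A) $$ (a, c) = (\<Sum>b<N. M a b * J b c)"
    if "a < N" "c < N" for a c
    using that B(1) unfolding A_def M_def by (simp_all add: scalar_prod_def atLeast0LessThan)
  with AB B(2) have "\<forall>a<N. \<forall>c<N. (\<Sum>b<N. J a b * M b c) = (if a = c then 1 else 0)"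
    "\<forall>a<N. \<forall>c<N. (\<Sum>b<N. M a b * J b c) = (if a = c then 1 else 0)"
    by auto
  moreover have "\<forall>a b. N \<le> a \<or> N \<le> b \<longrightarrow> M a b = 0"
    unfolding M_def by auto
  ultimately show thesis
    by (rule that)
qed

lemma jinv_inverse:
  fixes J :: "nat \<Rightarrow> nat \<Rightarrow> real"
  assumes skew: "\<forall>a<2 * n. \<forall>b<2 * n. J a b = - J b a"
    and nondeg: "\<forall>x :: nat \<Rightarrow> real. (\<forall>b<2 * n. (\<Sum>a<2 * n. x a * J a b) = 0) \<longrightarrow> (\<forall>a<2 * n. x a = 0)"
  shows "(\<forall>a<2 * n. \<forall>c<2 * n. (\<Sum>b<2 * n. J a b * jinv n J b c) = (if a = c then 1 else 0))
       \<and> (\<forall>a<2 * n. \<forall>c<2 * n. (\<Sum>b<2 * n. jinv n J a b * J b c) = (if a = c then 1 else 0))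
       \<and> (\<forall>a b. jinv n J a b = - jinv n J b a)"
proof -
  define N where "N = 2 * n"
  obtain M where M_right: "\<forall>a<N. \<forall>c<N. (\<Sum>b<N. J a b * M b c) = (if a = c then 1 else 0)"
    and M_left: "\<forall>a<N. \<forall>c<N. (\<Sum>b<N. M a b * J b c) = (if a = c then 1 else 0)"
    and M_out: "\<forall>a b. N \<le> a \<or> N \<le> b \<longrightarrow> M a b = 0"
    using nondegenerate_inverse[of N J] skew nondeg unfolding N_def by blast
  have jinv_M: "jinv n J = M"
    unfolding jinv_def N_def[symmetric]
  proof (rule the_equality)
    fix M' assume "(\<forall>a<N. \<forall>c<N. (\<Sum>b<N. J a b * M' b c) = (if a = c then 1 else 0))
        \<and> (\<forall>a b. N \<le> a \<or> N \<le> b \<longrightarrow> M' a b = 0)"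
    then show "M' = M"
      using right_inverse_eq_left_inverse[OF M_left] M_out by blast
  qed (use M_right M_out in blast)
  have skew_M: "(\<lambda>a b. - M b a) = M"
  proof (rule right_inverse_eq_left_inverse[OF M_left])
    show "\<forall>a<N. \<forall>c<N. (\<Sum>b<N. J a b * - M c b) = (if a = c then 1 else 0)"
    proof (intro allI impI)
      fix a c assume ac: "a < N" "c < N"
      have "(\<Sum>b<N. J a b * - M c b) = (\<Sum>b<N. M c b * J b a)"
      proof (rule sum.cong)
        fix b assume "b \<in> {..<N}"
        with ac show "J a b * - M c b = M c b * J b a"
          using skew[rule_format, of a b] unfolding N_def by simp
      qed simp
      with M_left ac show "(\<Sum>b<N. J a b * - M c b) = (if a = c then 1 else 0)"
        by auto
    qed
  qed (use M_out in auto)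
  have M_skew: "\<forall>a b. M a b = - M b a"
  proof (intro allI)
    fix a b
    have "- M a b = M b a"
      using fun_cong[OF fun_cong[OF skew_M, of b], of a] by simp
    then show "M a b = - M b a"
      by (metis minus_minus)
  qed
  show ?thesis
    unfolding jinv_M N_def[symmetric] by (rule conjI[OF M_right conjI[OF M_left M_skew]])
qed

locale heisenberg_rep =
  fixes n :: nat and J :: "nat \<Rightarrow> nat \<Rightarrow> real"
    and D :: "nat \<Rightarrow> 'v::real_vector \<Rightarrow> 'v" and T :: "'v \<Rightarrow> 'v"
  assumes n3: "n \<ge> 3"
    and J_skew: "\<forall>a<2 * n. \<forall>b<2 * n. J a b = - J b a"
    and J_nondeg: "\<forall>x :: nat \<Rightarrow> real. (\<forall>b<2 * n. (\<Sum>a<2 * n. x a * J a b) = 0) \<longrightarrow> (\<forall>a<2 * n. x a = 0)"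
    and D_lin: "\<forall>a<2 * n. linear (D a)"
    and T_lin: "linear T"
    and rep_bracket: "\<forall>a<2 * n. \<forall>b<2 * n. \<forall>v. D a (D b v) - D b (D a v) = J a b *\<^sub>R T v"
begin

abbreviation "N \<equiv> 2 * n"
abbreviation "M \<equiv> jinv n J"

lemma jinv_J: "a < N \<Longrightarrow> c < N \<Longrightarrow> (\<Sum>b<N. M a b * J b c) = (if a = c then 1 else 0)"
  and jinv_skew: "M a b = - M b a"
  using jinv_inverse[OF J_skew J_nondeg] by blast+

lemma J_antisym: "a < N \<Longrightarrow> b < N \<Longrightarrow> J a b = - J b a"
  using J_skew by blast

lemma N_ge_6: "real N \<ge> 6"
  using n3 by simp

lemma D_simps [simp]:
  assumes "a < N"
  shows "D a (x + y) = D a x + D a y" "D a (x - y) = D a x - D a y" "D a (r *\<^sub>R x) = r *\<^sub>R D a x"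
    "D a (- x) = - D a x" "D a 0 = 0"
  using assms D_lin linear_add linear_diff linear_scale linear_neg linear_0 by blast+

lemma T_simps [simp]:
  "T (x + y) = T x + T y" "T (x - y) = T x - T y" "T (r *\<^sub>R x) = r *\<^sub>R T x" "T (- x) = - T x" "T 0 = 0"
  using T_lin linear_add linear_diff linear_scale linear_neg linear_0 by blast+

lemma J_nonzero: obtains a b where "a < N" "b < N" "J a b \<noteq> 0"
proof -
  have "\<not> (\<forall>a<N. (\<lambda>_. 1::real) a = 0)" using n3 by (auto intro: exI[of _ 0])
  then obtain b where "b < N" "(\<Sum>a<N. J a b) \<noteq> 0" using J_nondeg[rule_format, of "\<lambda>_. 1"] by auto
  then obtain a where "a < N" "J a b \<noteq> 0" by (meson lessThan_iff sum.neutral)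
  then show ?thesis using \<open>b < N\<close> that by blast
qed

lemma T_eq_0: assumes "\<And>a. a < N \<Longrightarrow> D a v = 0" shows "T v = 0"
proof -
  obtain a b where ab: "a < N" "b < N" "J a b \<noteq> 0" by (rule J_nonzero)
  have "J a b *\<^sub>R T v = D a (D b v) - D b (D a v)" using rep_bracket ab by simp
  with ab assms show ?thesis by simp
qed

lemma eth2_eth1:
  assumes "a < N" "b < N" "c < N"
  shows "eth2 D (eth1 D w) a b c = jwedge1 J (\<lambda>c. T (w c)) a b c"
proof -
  have "eth2 D (eth1 D w) a b c = (D a (D b (w c)) - D b (D a (w c))) - (D a (D c (w b)) - D c (D a (w b)))
     + (D b (D c (w a)) - D c (D b (w a)))"
    using assms by (simp add: eth2_def eth1_def)
  also have "\<dots> = jwedge1 J (\<lambda>c. T (w c)) a b c"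
    using assms by (simp add: rep_bracket jwedge1_def)
  finally show ?thesis .
qed

lemma eth2_J:
  assumes "a < N" "b < N" "c < N"
  shows "eth2 D (\<lambda>a b. J a b *\<^sub>R s) a b c = jwedge1 J (\<lambda>c. D c s) a b c"
  using assms by (simp add: eth2_def jwedge1_def algebra_simps)

lemma eth3_eth2:
  assumes "a < N" "b < N" "c < N" "d < N"
  shows "eth3 D (eth2 D W) a b c d = jwedge2 J (\<lambda>a b. T (W a b)) a b c d"
proof -
  have "eth3 D (eth2 D W) a b c d
     = (D a (D b (W c d)) - D b (D a (W c d))) - (D a (D c (W b d)) - D c (D a (W b d)))
     + (D a (D d (W b c)) - D d (D a (W b c))) + (D b (D c (W a d)) - D c (D b (W a d)))
     - (D b (D d (W a c)) - D d (D b (W a c))) + (D c (D d (W a b)) - D d (D c (W a b)))"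
    using assms by (simp add: eth3_def eth2_def)
  also have "\<dots> = jwedge2 J (\<lambda>a b. T (W a b)) a b c d"
    using assms by (simp add: rep_bracket jwedge2_def)
  finally show ?thesis .
qed

lemma eth3_jwedge1:
  assumes "a < N" "b < N" "c < N" "d < N"
  shows "eth3 D (jwedge1 J u) a b c d = jwedge2 J (eth1 D u) a b c d"
  using assms by (simp add: eth3_def jwedge1_def jwedge2_def eth1_def scaleR_diff_right)

lemma jinv_contract_J: "(\<Sum>a<N. \<Sum>b<N. M a b *\<^sub>R (J a b *\<^sub>R x)) = - real N *\<^sub>R (x :: 'a::real_vector)"
proof -
  have "(\<Sum>b<N. M a b * J a b) = - 1" if a: "a < N" for a
  proof -
    have "(\<Sum>b<N. M a b * J a b) = (\<Sum>b<N. - (M a b * J b a))"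
      by (intro sum.cong) (auto simp: J_antisym[OF a])
    also have "\<dots> = - 1" using jinv_J[OF a a] by (simp add: sum_negf)
    finally show ?thesis .
  qed
  then have "(\<Sum>a<N. \<Sum>b<N. M a b * J a b) = - real N" by simp
  then show ?thesis by (simp add: scaleR_sum_left[symmetric])
qed

lemma jinv_contract_J_left:
  assumes c: "c < N"
  shows "(\<Sum>a<N. \<Sum>b<N. M a b *\<^sub>R (J a c *\<^sub>R g b)) = - (g c :: 'a::real_vector)"
proof -
  have "(\<Sum>a<N. M a b * J a c) = - (if b = c then 1 else 0)" if b: "b < N" for b
  proof -
    have "(\<Sum>a<N. M a b * J a c) = (\<Sum>a<N. - (M b a * J a c))"
      by (intro sum.cong) (auto simp: jinv_skew[of _ b])
    also have "\<dots> = - (if b = c then 1 else 0)" using jinv_J[OF b c] by (simp add: sum_negf)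
    finally show ?thesis .
  qed
  then have "(\<Sum>b<N. \<Sum>a<N. (M a b * J a c) *\<^sub>R g b) = (\<Sum>b<N. - ((if b = c then 1 else 0) *\<^sub>R g b))"
    by (intro sum.cong) (simp_all add: scaleR_sum_left[symmetric])
  also have "\<dots> = - g c"
    using c by (simp add: sum_negf if_distrib[of "\<lambda>x. x *\<^sub>R _"] cong: if_cong)
  finally show ?thesis by (subst sum.swap) simp
qed

lemma jinv_contract_J_right:
  assumes c: "c < N"
  shows "(\<Sum>a<N. \<Sum>b<N. M a b *\<^sub>R (J b c *\<^sub>R g a)) = (g c :: 'a::real_vector)"
proof -
  have "(\<Sum>a<N. \<Sum>b<N. M a b *\<^sub>R (J b c *\<^sub>R g a)) = (\<Sum>a<N. (\<Sum>b<N. M a b * J b c) *\<^sub>R g a)"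
    by (simp add: scaleR_sum_left)
  also have "\<dots> = (\<Sum>a<N. (if a = c then 1 else 0) *\<^sub>R g a)"
    by (intro sum.cong) (simp_all add: jinv_J c)
  also have "\<dots> = g c"
    using c by (simp add: if_distrib[of "\<lambda>x. x *\<^sub>R _"] cong: if_cong)
  finally show ?thesis .
qed

lemma jinv_contract_jwedge1:
  assumes c: "c < N"
  shows "(\<Sum>a<N. \<Sum>b<N. M a b *\<^sub>R jwedge1 J u a b c) = (2 - real N) *\<^sub>R (u c :: 'a::real_vector)"
proof -
  have "(\<Sum>a<N. \<Sum>b<N. M a b *\<^sub>R jwedge1 J u a b c)
     = (\<Sum>a<N. \<Sum>b<N. M a b *\<^sub>R (J a b *\<^sub>R u c)) - (\<Sum>a<N. \<Sum>b<N. M a b *\<^sub>R (J a c *\<^sub>R u b))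
        + (\<Sum>a<N. \<Sum>b<N. M a b *\<^sub>R (J b c *\<^sub>R u a))"
    by (simp add: jwedge1_def scaleR_diff_right scaleR_add_right sum.distrib sum_subtractf)
  also have "\<dots> = - real N *\<^sub>R u c - - u c + u c"
    by (simp only: jinv_contract_J jinv_contract_J_left[OF c] jinv_contract_J_right[OF c])
  also have "\<dots> = (2 - real N) *\<^sub>R u c"
    by (simp add: algebra_simps scaleR_2)
  finally show ?thesis .
qed

lemma jinv_contract_jwedge2:
  assumes anti: "\<And>a b. a < N \<Longrightarrow> b < N \<Longrightarrow> g a b = - g b a" and cd: "c < N" "d < N"
  shows "(\<Sum>a<N. \<Sum>b<N. M a b *\<^sub>R jwedge2 J g a b c d)
     = (4 - real N) *\<^sub>R (g c d :: 'a::real_vector) + J c d *\<^sub>R (\<Sum>a<N. \<Sum>b<N. M a b *\<^sub>R g a b)"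
proof -
  have trace: "(\<Sum>a<N. \<Sum>b<N. M a b *\<^sub>R (J c d *\<^sub>R g a b)) = J c d *\<^sub>R (\<Sum>a<N. \<Sum>b<N. M a b *\<^sub>R g a b)"
    by (simp add: scaleR_sum_right mult.commute)
  have four: "(4::real) *\<^sub>R g c d = g c d + g c d + g c d + g c d"
    using scaleR_add_left[of 2 2 "g c d"] by (simp add: scaleR_2)
  have "(\<Sum>a<N. \<Sum>b<N. M a b *\<^sub>R jwedge2 J g a b c d)
     = (\<Sum>a<N. \<Sum>b<N. M a b *\<^sub>R (J a b *\<^sub>R g c d)) - (\<Sum>a<N. \<Sum>b<N. M a b *\<^sub>R (J a c *\<^sub>R g b d))
       + (\<Sum>a<N. \<Sum>b<N. M a b *\<^sub>R (J a d *\<^sub>R g b c)) + (\<Sum>a<N. \<Sum>b<N. M a b *\<^sub>R (J b c *\<^sub>R g a d))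
       - (\<Sum>a<N. \<Sum>b<N. M a b *\<^sub>R (J b d *\<^sub>R g a c)) + (\<Sum>a<N. \<Sum>b<N. M a b *\<^sub>R (J c d *\<^sub>R g a b))"
    by (simp add: jwedge2_def scaleR_diff_right scaleR_add_right sum.distrib sum_subtractf)
  also have "\<dots> = - real N *\<^sub>R g c d - - g c d + - g d c + g c d - g d c
      + J c d *\<^sub>R (\<Sum>a<N. \<Sum>b<N. M a b *\<^sub>R g a b)"
    by (simp only: jinv_contract_J jinv_contract_J_left[OF cd(1)] jinv_contract_J_left[OF cd(2)]
        jinv_contract_J_right[OF cd(1)] jinv_contract_J_right[OF cd(2)] trace)
  also have "\<dots> = (4 - real N) *\<^sub>R g c d + J c d *\<^sub>R (\<Sum>a<N. \<Sum>b<N. M a b *\<^sub>R g a b)"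
    using anti[OF cd(2,1)] four by (simp add: algebra_simps scaleR_2)
  finally show ?thesis .
qed

lemma jwedge1_antisym:
  assumes "a < N" "b < N" "c < N"
  shows "jwedge1 J u a b c = - jwedge1 J u b a c" "jwedge1 J u a b c = - jwedge1 J u a c b"
    "jwedge1 J u a b c = - jwedge1 J u c b a"
  using assms J_antisym[of a b] J_antisym[of a c] J_antisym[of b c]
  by (simp_all add: jwedge1_def algebra_simps)

text \<open>This is where \<open>n \<ge> 3\<close> enters: the contraction factors \<open>2 - 2n\<close> and \<open>4 - 2n\<close> must not vanish.\<close>

lemma jwedge1_eq_0D:
  assumes zero: "\<And>a b c. a < N \<Longrightarrow> b < N \<Longrightarrow> c < N \<Longrightarrow> jwedge1 J u a b c = 0" and c: "c < N"
  shows "u c = 0"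
proof -
  have "(2 - real N) *\<^sub>R u c = (\<Sum>a<N. \<Sum>b<N. M a b *\<^sub>R jwedge1 J u a b c)"
    by (rule jinv_contract_jwedge1[OF c, symmetric])
  also have "\<dots> = 0"
    using zero c by (auto intro!: sum.neutral)
  finally show ?thesis
    using N_ge_6 by simp
qed

lemma jwedge2_eq_0D:
  assumes anti: "\<And>a b. a < N \<Longrightarrow> b < N \<Longrightarrow> g a b = - g b a"
    and zero: "\<And>a b c d. a < N \<Longrightarrow> b < N \<Longrightarrow> c < N \<Longrightarrow> d < N \<Longrightarrow> jwedge2 J g a b c d = 0"
    and cd: "c < N" "d < N"
  shows "g c d = 0"
proof -
  define tr where "tr = (\<Sum>a<N. \<Sum>b<N. M a b *\<^sub>R g a b)"
  have contracted: "(4 - real N) *\<^sub>R g c d + J c d *\<^sub>R tr = 0" if "c < N" "d < N" for c d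
  proof -
    have "(4 - real N) *\<^sub>R g c d + J c d *\<^sub>R tr = (\<Sum>a<N. \<Sum>b<N. M a b *\<^sub>R jwedge2 J g a b c d)"
      using jinv_contract_jwedge2[OF anti that] unfolding tr_def by simp
    also have "\<dots> = 0"
      using zero that by (auto intro!: sum.neutral)
    finally show ?thesis .
  qed
  \<comment> \<open>Contracting once more gives (4 - 2N) tr = 0.\<close>
  have "0 = (\<Sum>c<N. \<Sum>d<N. M c d *\<^sub>R ((4 - real N) *\<^sub>R g c d + J c d *\<^sub>R tr))"
    using contracted by (auto intro!: sum.neutral[symmetric])
  also have "\<dots> = (\<Sum>c<N. \<Sum>d<N. (4 - real N) *\<^sub>R (M c d *\<^sub>R g c d))
      + (\<Sum>c<N. \<Sum>d<N. M c d *\<^sub>R (J c d *\<^sub>R tr))"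
    by (simp add: scaleR_add_right sum.distrib mult.commute)
  also have "\<dots> = (4 - real N) *\<^sub>R tr + (- real N) *\<^sub>R tr"
    unfolding jinv_contract_J tr_def by (simp add: scaleR_sum_right)
  finally have "tr = 0"
    using N_ge_6 by (simp flip: scaleR_add_left)
  then show ?thesis
    using contracted[OF cd] N_ge_6 by simp
qed

text \<open>Apply \<open>\<eth>\<close> to \<open>\<eth>\<tau> = J \<and> \<beta>\<close>: the left side becomes \<open>J \<and> T\<tau>\<close>, the right side \<open>J \<and> \<eth>\<beta>\<close>.\<close>

lemma eth1_eq_T_if_eth2_eq_jwedge1:
  assumes anti: "\<And>a b. a < N \<Longrightarrow> b < N \<Longrightarrow> \<tau> a b = - \<tau> b a"
    and closed: "\<And>a b c. a < N \<Longrightarrow> b < N \<Longrightarrow> c < N \<Longrightarrow> eth2 D \<tau> a b c = jwedge1 J \<beta> a b c"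
    and ab: "a < N" "b < N"
  shows "eth1 D \<beta> a b = T (\<tau> a b)"
proof -
  define \<gamma> where "\<gamma> = (\<lambda>a b. eth1 D \<beta> a b - T (\<tau> a b))"
  have "jwedge2 J \<gamma> a b c d = 0" if "a < N" "b < N" "c < N" "d < N" for a b c d
  proof -
    have "jwedge2 J \<gamma> a b c d = eth3 D (jwedge1 J \<beta>) a b c d - eth3 D (eth2 D \<tau>) a b c d"
      using that by (simp add: \<gamma>_def jwedge2_diff eth3_jwedge1 eth3_eth2)
    also have "\<dots> = 0"
      using that by (simp add: eth3_def closed)
    finally show ?thesis .
  qed
  moreover have "\<gamma> a b = - \<gamma> b a" if "a < N" "b < N" for a b
    using anti[OF that] that by (simp add: \<gamma>_def eth1_def)
  ultimately have "\<gamma> a b = 0"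
    using jwedge2_eq_0D ab by blast
  then show ?thesis
    by (simp add: \<gamma>_def)
qed

lemma centre_part_if_exact:
  assumes exact: "\<And>a b. a < N \<Longrightarrow> b < N \<Longrightarrow> W a b = eth1 D w a b + J a b *\<^sub>R \<phi>"
    and closed: "\<And>a b c. a < N \<Longrightarrow> b < N \<Longrightarrow> c < N \<Longrightarrow> eth2 D W a b c = jwedge1 J \<psi> a b c"
    and c: "c < N"
  shows "\<psi> c = T (w c) + D c \<phi>"
proof -
  have "jwedge1 J (\<lambda>c. \<psi> c - (T (w c) + D c \<phi>)) a b c = 0" if "a < N" "b < N" "c < N" for a b c
  proof -
    have "eth2 D W a b c = eth2 D (eth1 D w) a b c + eth2 D (\<lambda>a b. J a b *\<^sub>R \<phi>) a b c"
      using that by (simp add: eth2_def exact algebra_simps)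
    then show ?thesis
      using that by (simp add: jwedge1_diff jwedge1_add closed eth2_eth1 eth2_J)
  qed
  then have "\<psi> c - (T (w c) + D c \<phi>) = 0"
    using jwedge1_eq_0D[OF _ c] by blast
  then show ?thesis
    by simp
qed

section \<open>The \<open>J\<close>-trace-free decomposition\<close>

lemma trace_free_2_iff: "trace_free n J 2 \<tau> \<longleftrightarrow> (\<Sum>a<N. \<Sum>b<N. M a b *\<^sub>R \<tau> [a, b]) = 0"
  by (simp add: trace_free_def)

lemma trace_free_3_iff: "trace_free n J 3 \<tau> \<longleftrightarrow> (\<forall>c. (\<Sum>a<N. \<Sum>b<N. M a b *\<^sub>R \<tau> [a, b, c]) = 0)"
proof -
  have "length cs + 2 = 3 \<longleftrightarrow> (\<exists>c. cs = [c])" for cs :: "nat list"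
    by (auto simp: length_Suc_conv numeral_3_eq_3)
  then show ?thesis
    unfolding trace_free_def by auto
qed

lemma
  fixes \<tau> \<tau>' :: "nat list \<Rightarrow> 'a::real_vector"
  shows trace_free_add: "trace_free n J k \<tau> \<Longrightarrow> trace_free n J k \<tau>' \<Longrightarrow> trace_free n J k (\<lambda>xs. \<tau> xs + \<tau>' xs)"
    and trace_free_diff: "trace_free n J k \<tau> \<Longrightarrow> trace_free n J k \<tau>' \<Longrightarrow> trace_free n J k (\<lambda>xs. \<tau> xs - \<tau>' xs)"
    and trace_free_zero: "trace_free n J k (\<lambda>_. 0 :: 'a)"
  by (simp_all add: trace_free_def scaleR_add_right scaleR_diff_right sum.distrib sum_subtractf)

lemma trace_free_scale:
  fixes \<tau> :: "nat list \<Rightarrow> 'a::real_vector"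
  assumes "trace_free n J k \<tau>"
  shows "trace_free n J k (\<lambda>xs. r *\<^sub>R \<tau> xs)"
  unfolding trace_free_def
proof (intro allI impI)
  fix cs :: "nat list" assume "length cs + 2 = k"
  then have "(\<Sum>a<N. \<Sum>b<N. M a b *\<^sub>R \<tau> (a # b # cs)) = 0"
    using assms by (simp add: trace_free_def)
  moreover have "(\<Sum>a<N. \<Sum>b<N. M a b *\<^sub>R (r *\<^sub>R \<tau> (a # b # cs)))
      = r *\<^sub>R (\<Sum>a<N. \<Sum>b<N. M a b *\<^sub>R \<tau> (a # b # cs))"
    by (simp add: scaleR_sum_right mult.commute)
  ultimately show "(\<Sum>a<N. \<Sum>b<N. M a b *\<^sub>R (r *\<^sub>R \<tau> (a # b # cs))) = 0"
    by simp
qed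

lemma trace_free_decomp_2:
  assumes alt: "alt_form N 2 \<Phi>"
  shows "\<exists>\<tau> \<beta>. alt_form N 2 \<tau> \<and> trace_free n J 2 \<tau> \<and> alt_form N 0 \<beta> \<and> (\<forall>xs. \<Phi> xs = \<tau> xs + jwedge n J \<beta> xs)"
proof -
  define s where "s = - (1 / real N) *\<^sub>R (\<Sum>a<N. \<Sum>b<N. M a b *\<^sub>R \<Phi> [a, b])"
  define \<tau> where "\<tau> = form2 N (\<lambda>a b. \<Phi> [a, b] - J a b *\<^sub>R s)"
  have "alt_form N 2 \<tau>"
    unfolding \<tau>_def
  proof (rule alt_form_form2)
    fix a b assume "a < N" "b < N"
    then show "\<Phi> [a, b] - J a b *\<^sub>R s = - (\<Phi> [b, a] - J b a *\<^sub>R s)"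
      using alt_form_2_antisym[OF alt, of a b] J_antisym[of a b] by simp
  qed
  moreover have "trace_free n J 2 \<tau>"
  proof -
    have "(\<Sum>a<N. \<Sum>b<N. M a b *\<^sub>R \<tau> [a, b])
        = (\<Sum>a<N. \<Sum>b<N. M a b *\<^sub>R \<Phi> [a, b]) - (\<Sum>a<N. \<Sum>b<N. M a b *\<^sub>R (J a b *\<^sub>R s))"
      unfolding \<tau>_def by (simp add: scaleR_diff_right sum_subtractf)
    also have "\<dots> = (\<Sum>a<N. \<Sum>b<N. M a b *\<^sub>R \<Phi> [a, b]) + real N *\<^sub>R s"
      by (simp only: jinv_contract_J) simp
    also have "\<dots> = 0"
      using N_ge_6 by (simp add: s_def)
    finally show ?thesis by (simp add: trace_free_2_iff)
  qed
  moreover have "\<Phi> xs = \<tau> xs + jwedge n J (form0 s) xs" for xs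
    by (subst alt_form_2_eq[OF alt]) (simp add: \<tau>_def jwedge_form0 form2_diff)
  ultimately show ?thesis
    using alt_form_form0 by blast
qed

lemma trace_free_decomp_3:
  assumes alt: "alt_form N 3 \<Phi>"
  shows "\<exists>\<tau> \<beta>. alt_form N 3 \<tau> \<and> trace_free n J 3 \<tau> \<and> alt_form N 1 \<beta> \<and> (\<forall>xs. \<Phi> xs = \<tau> xs + jwedge n J \<beta> xs)"
proof -
  define u where "u c = (1 / (2 - real N)) *\<^sub>R (\<Sum>a<N. \<Sum>b<N. M a b *\<^sub>R \<Phi> [a, b, c])" for c
  define \<tau> where "\<tau> = form3 N (\<lambda>a b c. \<Phi> [a, b, c] - jwedge1 J u a b c)"
  have "alt_form N 3 \<tau>"
    unfolding \<tau>_def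
  proof (rule alt_form_form3)
    fix a b c assume abc: "a < N" "b < N" "c < N"
    show "\<Phi> [a, b, c] - jwedge1 J u a b c = - (\<Phi> [b, a, c] - jwedge1 J u b a c)"
      using alt_form_3_antisym(1)[OF alt, of a b c] jwedge1_antisym(1)[OF abc, of u] by simp
    show "\<Phi> [a, b, c] - jwedge1 J u a b c = - (\<Phi> [a, c, b] - jwedge1 J u a c b)"
      using alt_form_3_antisym(2)[OF alt, of a b c] jwedge1_antisym(2)[OF abc, of u] by simp
    show "\<Phi> [a, b, c] - jwedge1 J u a b c = - (\<Phi> [c, b, a] - jwedge1 J u c b a)"
      using alt_form_3_antisym(3)[OF alt, of a b c] jwedge1_antisym(3)[OF abc, of u] by simp
  qed
  moreover have "trace_free n J 3 \<tau>"
  proof -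
    have "(\<Sum>a<N. \<Sum>b<N. M a b *\<^sub>R \<tau> [a, b, c]) = 0" for c
    proof (cases "c < N")
      case True
      have "(\<Sum>a<N. \<Sum>b<N. M a b *\<^sub>R \<tau> [a, b, c])
          = (\<Sum>a<N. \<Sum>b<N. M a b *\<^sub>R \<Phi> [a, b, c]) - (\<Sum>a<N. \<Sum>b<N. M a b *\<^sub>R jwedge1 J u a b c)"
        unfolding \<tau>_def using True by (simp add: scaleR_diff_right sum_subtractf)
      also have "\<dots> = 0"
        using True N_ge_6 by (simp add: jinv_contract_jwedge1 u_def)
      finally show ?thesis .
    qed (simp add: \<tau>_def)
    then show ?thesis by (simp add: trace_free_3_iff)
  qed
  moreover have "\<Phi> xs = \<tau> xs + jwedge n J (form1 N u) xs" for xs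
    by (subst alt_form_3_eq[OF alt]) (auto simp: \<tau>_def jwedge_form1 form3_def split: list.split)
  ultimately show ?thesis
    using alt_form_form1 by blast
qed

lemma jwedge_trace_free_eq_0:
  assumes k: "k \<in> {2, 3}" and alt: "alt_form N (k - 2) \<beta>" and tf: "trace_free n J k (jwedge n J \<beta>)"
  shows "\<beta> = (\<lambda>_. 0)"
proof (cases "k = 2")
  case True
  with alt have \<beta>: "\<beta> = form0 (\<beta> [])" by (simp add: alt_form_0_eq)
  have "- real N *\<^sub>R \<beta> [] = (\<Sum>a<N. \<Sum>b<N. M a b *\<^sub>R jwedge n J \<beta> [a, b])"
    using jinv_contract_J[of "\<beta> []"] by (subst (2) \<beta>) (simp add: jwedge_form0)
  also have "\<dots> = 0"
    using tf True by (simp add: trace_free_2_iff)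
  finally have "\<beta> [] = 0" using N_ge_6 by simp
  then show ?thesis by (subst \<beta>) (simp add: form0_def fun_eq_iff)
next
  case False
  with k alt have \<beta>: "\<beta> = form1 N (\<lambda>a. \<beta> [a])" by (simp add: alt_form_1_eq)
  have "\<beta> [c] = 0" if c: "c < N" for c
  proof -
    have "(2 - real N) *\<^sub>R \<beta> [c] = (\<Sum>a<N. \<Sum>b<N. M a b *\<^sub>R jwedge n J \<beta> [a, b, c])"
      using c by (subst (2) \<beta>) (simp add: jwedge_form1 jinv_contract_jwedge1)
    also have "\<dots> = 0"
      using tf k False by (simp add: trace_free_3_iff)
    finally show ?thesis using N_ge_6 by simp
  qed
  then have "form1 N (\<lambda>a. \<beta> [a]) = form1 N (\<lambda>_. 0)"
    by (simp add: form1_eq_iff)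
  then show ?thesis
    using \<beta> by (simp add: form_zero)
qed

lemma tf_part_eqI:
  assumes k: "k \<in> {2, 3}" and "alt_form N k \<tau>" "trace_free n J k \<tau>" "alt_form N (k - 2) \<beta>"
    and decomp: "\<And>xs. \<Phi> xs = \<tau> xs + jwedge n J \<beta> xs"
  shows "tf_part n J k \<Phi> = \<tau>"
  unfolding tf_part_def
proof (rule the_equality)
  show "alt_form N k \<tau> \<and> trace_free n J k \<tau> \<and> (\<exists>\<beta>. alt_form N (k - 2) \<beta> \<and> (\<forall>xs. \<Phi> xs = \<tau> xs + jwedge n J \<beta> xs))"
    using assms by blast
  fix \<tau>'
  assume "alt_form N k \<tau>' \<and> trace_free n J k \<tau>' \<and> (\<exists>\<beta>. alt_form N (k - 2) \<beta> \<and> (\<forall>xs. \<Phi> xs = \<tau>' xs + jwedge n J \<beta> xs))"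
  then obtain \<beta>' where \<tau>': "trace_free n J k \<tau>'" "alt_form N (k - 2) \<beta>'"
    and decomp': "\<And>xs. \<Phi> xs = \<tau>' xs + jwedge n J \<beta>' xs"
    by blast
  have diff: "jwedge n J (\<lambda>xs. \<beta> xs - \<beta>' xs) = (\<lambda>xs. \<tau>' xs - \<tau> xs)"
    using decomp decomp' by (simp add: jwedge_diff fun_eq_iff algebra_simps)
  have "(\<lambda>xs. \<beta> xs - \<beta>' xs) = (\<lambda>_. 0)"
    by (rule jwedge_trace_free_eq_0[OF k]) (use assms \<tau>' diff in \<open>simp_all add: alt_form_diff trace_free_diff\<close>)
  with diff show "\<tau>' = \<tau>"
    by (simp add: jwedge_zero fun_eq_iff)
qed

lemma tf_part_decomp:
  assumes k: "k \<in> {2, 3}" and alt: "alt_form N k \<Phi>"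
  obtains \<beta> where "alt_form N k (tf_part n J k \<Phi>)" "trace_free n J k (tf_part n J k \<Phi>)"
    "alt_form N (k - 2) \<beta>" "\<And>xs. \<Phi> xs = tf_part n J k \<Phi> xs + jwedge n J \<beta> xs"
proof -
  from k consider "k = 2" | "k = 3" by blast
  then have "\<exists>\<tau> \<beta>. alt_form N k \<tau> \<and> trace_free n J k \<tau> \<and> alt_form N (k - 2) \<beta>
      \<and> (\<forall>xs. \<Phi> xs = \<tau> xs + jwedge n J \<beta> xs)"
    by cases (use alt trace_free_decomp_2 trace_free_decomp_3 in simp_all)
  then obtain \<tau> \<beta> where "alt_form N k \<tau>" "trace_free n J k \<tau>" "alt_form N (k - 2) \<beta>"
    "\<And>xs. \<Phi> xs = \<tau> xs + jwedge n J \<beta> xs"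
    by blast
  moreover from this have "tf_part n J k \<Phi> = \<tau>"
    by (intro tf_part_eqI[OF k])
  ultimately show thesis
    using that by simp
qed

lemma tf_part_trace_free:
  "k \<in> {2, 3} \<Longrightarrow> alt_form N k \<tau> \<Longrightarrow> trace_free n J k \<tau> \<Longrightarrow> tf_part n J k \<tau> = \<tau>"
  by (rule tf_part_eqI[where \<beta>="\<lambda>_. 0"]) (simp_all add: alt_form_zero jwedge_zero)

lemma tf_part_eq_iff:
  assumes k: "k \<in> {2, 3}" and "alt_form N k \<Phi>" "alt_form N k \<Psi>"
  shows "tf_part n J k \<Phi> = tf_part n J k \<Psi> \<longleftrightarrow>
    (\<exists>\<beta>. alt_form N (k - 2) \<beta> \<and> (\<forall>xs. \<Phi> xs = \<Psi> xs + jwedge n J \<beta> xs))"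
proof -
  obtain \<beta>\<Phi> where \<Phi>: "alt_form N (k - 2) \<beta>\<Phi>" "\<And>xs. \<Phi> xs = tf_part n J k \<Phi> xs + jwedge n J \<beta>\<Phi> xs"
    using tf_part_decomp[OF k assms(2)] by blast
  obtain \<beta>\<Psi> where \<Psi>: "alt_form N k (tf_part n J k \<Psi>)" "trace_free n J k (tf_part n J k \<Psi>)"
    "alt_form N (k - 2) \<beta>\<Psi>" "\<And>xs. \<Psi> xs = tf_part n J k \<Psi> xs + jwedge n J \<beta>\<Psi> xs"
    using tf_part_decomp[OF k assms(3)] by blast
  show ?thesis
  proof
    assume "tf_part n J k \<Phi> = tf_part n J k \<Psi>"
    then have "\<Phi> xs = \<Psi> xs + jwedge n J (\<lambda>xs. \<beta>\<Phi> xs - \<beta>\<Psi> xs) xs" for xs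
      using \<Phi>(2)[of xs] \<Psi>(4)[of xs] by (simp add: jwedge_diff)
    then show "\<exists>\<beta>. alt_form N (k - 2) \<beta> \<and> (\<forall>xs. \<Phi> xs = \<Psi> xs + jwedge n J \<beta> xs)"
      using \<Phi>(1) \<Psi>(3) alt_form_diff by blast
  next
    assume "\<exists>\<beta>. alt_form N (k - 2) \<beta> \<and> (\<forall>xs. \<Phi> xs = \<Psi> xs + jwedge n J \<beta> xs)"
    then obtain \<beta> where "alt_form N (k - 2) \<beta>" "\<And>xs. \<Phi> xs = \<Psi> xs + jwedge n J \<beta> xs"
      by blast
    then have "tf_part n J k \<Phi> = tf_part n J k \<Psi>"
      using \<Psi> by (intro tf_part_eqI[OF k, where \<beta>="\<lambda>xs. \<beta>\<Psi> xs + \<beta> xs"])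
        (simp_all add: alt_form_add jwedge_add)
    then show "tf_part n J k \<Phi> = tf_part n J k \<Psi>" .
  qed
qed

lemma tf_part_eq_0_iff:
  fixes \<Phi> :: "nat list \<Rightarrow> 'a::real_vector"
  assumes "k \<in> {2, 3}" "alt_form N k \<Phi>"
  shows "tf_part n J k \<Phi> = (\<lambda>_. 0) \<longleftrightarrow> (\<exists>\<beta>. alt_form N (k - 2) \<beta> \<and> (\<forall>xs. \<Phi> xs = jwedge n J \<beta> xs))"
proof -
  have "tf_part n J k (\<lambda>_. 0) = (\<lambda>_. 0 :: 'a)"
    by (rule tf_part_trace_free[OF assms(1) alt_form_zero trace_free_zero])
  then show ?thesis
    using tf_part_eq_iff[OF assms alt_form_zero] by simp
qed

lemma tf_part_add:
  assumes k: "k \<in> {2, 3}" and "alt_form N k \<Phi>" "alt_form N k \<Psi>"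
  shows "tf_part n J k (\<lambda>xs. \<Phi> xs + \<Psi> xs) = (\<lambda>xs. tf_part n J k \<Phi> xs + tf_part n J k \<Psi> xs)"
proof -
  obtain \<beta>\<Phi> where \<Phi>: "alt_form N k (tf_part n J k \<Phi>)" "trace_free n J k (tf_part n J k \<Phi>)"
    "alt_form N (k - 2) \<beta>\<Phi>" "\<And>xs. \<Phi> xs = tf_part n J k \<Phi> xs + jwedge n J \<beta>\<Phi> xs"
    using tf_part_decomp[OF k assms(2)] by blast
  obtain \<beta>\<Psi> where \<Psi>: "alt_form N k (tf_part n J k \<Psi>)" "trace_free n J k (tf_part n J k \<Psi>)"
    "alt_form N (k - 2) \<beta>\<Psi>" "\<And>xs. \<Psi> xs = tf_part n J k \<Psi> xs + jwedge n J \<beta>\<Psi> xs"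
    using tf_part_decomp[OF k assms(3)] by blast
  show ?thesis
    using \<Phi> \<Psi> by (intro tf_part_eqI[OF k, where \<beta>="\<lambda>xs. \<beta>\<Phi> xs + \<beta>\<Psi> xs"])
      (simp_all add: alt_form_add trace_free_add jwedge_add)
qed

lemma tf_part_scale:
  assumes k: "k \<in> {2, 3}" and "alt_form N k \<Phi>"
  shows "tf_part n J k (\<lambda>xs. r *\<^sub>R \<Phi> xs) = (\<lambda>xs. r *\<^sub>R tf_part n J k \<Phi> xs)"
proof -
  obtain \<beta> where \<Phi>: "alt_form N k (tf_part n J k \<Phi>)" "trace_free n J k (tf_part n J k \<Phi>)"
    "alt_form N (k - 2) \<beta>" "\<And>xs. \<Phi> xs = tf_part n J k \<Phi> xs + jwedge n J \<beta> xs"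
    using tf_part_decomp[OF k assms(2)] by blast
  show ?thesis
    using \<Phi> by (intro tf_part_eqI[OF k, where \<beta>="\<lambda>xs. r *\<^sub>R \<beta> xs"])
      (simp_all add: alt_form_scale trace_free_scale jwedge_scale scaleR_add_right)
qed

lemma tf_part_2_decomp:
  assumes "alt_form N 2 \<Phi>"
  obtains s where "\<And>xs. \<Phi> xs = tf_part n J 2 \<Phi> xs + jwedge n J (form0 s) xs"
proof (rule tf_part_decomp[of 2 \<Phi>])
  fix \<beta> assume \<beta>: "alt_form N (2 - 2) \<beta>" and decomp: "\<And>xs. \<Phi> xs = tf_part n J 2 \<Phi> xs + jwedge n J \<beta> xs"
  have "form0 (\<beta> []) = \<beta>"
    using \<beta> by (intro alt_form_0_eq[symmetric]) simp
  with decomp that[of "\<beta> []"] show thesis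
    by simp
qed (simp_all add: assms)

lemma tf_part_form2:
  assumes anti: "\<And>a b. a < N \<Longrightarrow> b < N \<Longrightarrow> W a b = - W b a"
  obtains s where "tf_part n J 2 (form2 N W) = form2 N (\<lambda>a b. W a b - J a b *\<^sub>R s)"
proof -
  obtain s where "\<And>xs. form2 N W xs = tf_part n J 2 (form2 N W) xs + jwedge n J (form0 s) xs"
    using tf_part_2_decomp[OF alt_form_form2[of N W, OF anti]] by blast
  then have "tf_part n J 2 (form2 N W) = form2 N (\<lambda>a b. W a b - J a b *\<^sub>R s)"
    by (simp add: fun_eq_iff jwedge_form0 form2_diff)
  then show thesis
    by (rule that)
qed

lemma trace_free_tf_part: "k \<in> {2, 3} \<Longrightarrow> alt_form N k \<Phi> \<Longrightarrow> trace_free n J k (tf_part n J k \<Phi>)"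
  by (rule tf_part_decomp)

lemma tf_part_2_eq_0_iff:
  assumes "alt_form N 2 \<Phi>"
  shows "tf_part n J 2 \<Phi> = (\<lambda>_. 0) \<longleftrightarrow> (\<exists>s. \<Phi> = jwedge n J (form0 s))"
proof -
  have "tf_part n J 2 \<Phi> = (\<lambda>_. 0) \<longleftrightarrow> (\<exists>\<beta>. alt_form N 0 \<beta> \<and> \<Phi> = jwedge n J \<beta>)"
    using tf_part_eq_0_iff[of 2, OF _ assms] by (simp add: fun_eq_iff)
  also have "\<dots> \<longleftrightarrow> (\<exists>s. \<Phi> = jwedge n J (form0 s))"
  proof
    assume "\<exists>\<beta>. alt_form N 0 \<beta> \<and> \<Phi> = jwedge n J \<beta>"
    then obtain \<beta> where \<beta>: "alt_form N 0 \<beta>" and "\<Phi> = jwedge n J \<beta>" by blast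
    moreover have "form0 (\<beta> []) = \<beta>" by (rule alt_form_0_eq[OF \<beta>, symmetric])
    ultimately show "\<exists>s. \<Phi> = jwedge n J (form0 s)" by (intro exI[of _ "\<beta> []"]) simp
  qed (use alt_form_form0 in blast)
  finally show ?thesis .
qed

lemma tf_part_3_eq_0_iff:
  assumes "alt_form N 3 \<Phi>"
  shows "tf_part n J 3 \<Phi> = (\<lambda>_. 0) \<longleftrightarrow> (\<exists>u. \<Phi> = jwedge n J (form1 N u))"
proof -
  have "tf_part n J 3 \<Phi> = (\<lambda>_. 0) \<longleftrightarrow> (\<exists>\<beta>. alt_form N 1 \<beta> \<and> \<Phi> = jwedge n J \<beta>)"
    using tf_part_eq_0_iff[of 3, OF _ assms] by (simp add: fun_eq_iff)
  also have "\<dots> \<longleftrightarrow> (\<exists>u. \<Phi> = jwedge n J (form1 N u))"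
  proof
    assume "\<exists>\<beta>. alt_form N 1 \<beta> \<and> \<Phi> = jwedge n J \<beta>"
    then obtain \<beta> where \<beta>: "alt_form N 1 \<beta>" and "\<Phi> = jwedge n J \<beta>" by blast
    moreover have "form1 N (\<lambda>a. \<beta> [a]) = \<beta>" by (rule alt_form_1_eq[OF \<beta>, symmetric])
    ultimately show "\<exists>u. \<Phi> = jwedge n J (form1 N u)" by (intro exI[of _ "\<lambda>a. \<beta> [a]"]) simp
  qed (use alt_form_form1 in blast)
  finally show ?thesis .
qed

lemma rho_simps [simp]: "a < N \<Longrightarrow> rho n D T a = D a" "rho n D T N = T"
  by (simp_all add: rho_def)

lemma Jh_simps [simp]: "a < N \<Longrightarrow> b < N \<Longrightarrow> Jh n J a b = J a b" "Jh n J N b = 0" "Jh n J a N = 0"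
  by (simp_all add: Jh_def)

lemma eth_form0: "eth n D (form0 v) = form1 N (\<lambda>a. D a v)"
  by (rule form1_eqI) (auto simp: eth_eval intro: eth_vanish[where k=0] form_vanish)

lemma eth_form1: "eth n D (form1 N w) = form2 N (eth1 D w)"
  by (rule form2_eqI) (auto simp: eth_eval eth1_def intro: eth_vanish[where k=1] form_vanish)

lemma eth_form2: "eth n D (form2 N W) = form3 N (eth2 D W)"
  by (rule form3_eqI) (auto simp: eth_eval eth2_def intro: eth_vanish[where k=2] form_vanish)

lemma rho_0: "x \<le> N \<Longrightarrow> rho n D T x 0 = 0"
  by (auto simp: rho_def)

lemma ce_d_form0: "ce_d n J D T (form0 v) = cochain1 N (\<lambda>a. D a v) (T v)"
  unfolding cochain1_def
  by (rule form1_eqI) (auto simp: ce_d_eval less_Suc_eq_le rho_def intro: ce_d_vanish[where k=0] form_vanish rho_0)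

lemma ce_d_cochain1:
  "ce_d n J D T (cochain1 N w s) = cochain2 N (\<lambda>a b. eth1 D w a b - J a b *\<^sub>R s) (\<lambda>b. T (w b) - D b s)"
  unfolding cochain2_def
proof (rule form2_eqI)
  fix x y assume "x < Suc N" "y < Suc N"
  then show "ce_d n J D T (cochain1 N w s) [x, y] = (if x < N \<and> y < N then eth1 D w x y - J x y *\<^sub>R s
      else if x < N then - (T (w x) - D x s) else if y < N then T (w y) - D y s else 0)"
    by (auto simp: ce_d_eval eth1_def less_Suc_eq)
next
  fix xs :: "nat list" assume "length xs \<noteq> 2 \<or> \<not> set xs \<subseteq> {..<Suc N}"
  then show "ce_d n J D T (cochain1 N w s) xs = 0"
    by (intro ce_d_vanish[where k=1] rho_0) (auto simp: cochain1_def form_vanish)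
qed

lemma ce_d_eq_0_iff:
  assumes "alt_form (Suc N) k \<omega>"
  shows "ce_d n J D T \<omega> = (\<lambda>_. 0) \<longleftrightarrow> (\<forall>xs. length xs = k + 1 \<longrightarrow> set xs \<subseteq> {..N} \<longrightarrow> ce_d n J D T \<omega> xs = 0)"
proof (intro iffI allI impI)
  fix xs assume H: "\<forall>xs. length xs = k + 1 \<longrightarrow> set xs \<subseteq> {..N} \<longrightarrow> ce_d n J D T \<omega> xs = 0"
  have "ce_d n J D T \<omega> xs = 0" for xs
  proof (cases "length xs = k + 1 \<and> set xs \<subseteq> {..N}")
    case False
    then show ?thesis
      by (intro ce_d_vanish[where k=k] rho_0) (auto simp: alt_form_vanish[OF assms] lessThan_Suc_atMost)
  qed (use H in blast)
  then show "ce_d n J D T \<omega> = (\<lambda>_. 0)" by blast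
qed simp

lemma ce_cocycle_0_iff:
  "\<omega> \<in> cyc (ce_sp n) (\<lambda>_. ce_d n J D T) 0 \<longleftrightarrow> (\<exists>v. \<omega> = form0 v \<and> (\<forall>a<N. D a v = 0))"
proof -
  have "form0 v \<in> cyc (ce_sp n) (\<lambda>_. ce_d n J D T) 0 \<longleftrightarrow> (\<forall>x\<in>{..N}. rho n D T x v = 0)" for v
    by (simp add: cyc_def ce_sp_def alt_form_form0 fun_eq_iff[symmetric] ce_d_eq_0_iff[OF alt_form_form0]
        all_lists_length_1 ce_d_eval)
  also have "\<dots> v \<longleftrightarrow> (\<forall>a<N. D a v = 0)" for v
  proof
    assume "\<forall>x\<in>{..N}. rho n D T x v = 0"
    then show "\<forall>a<N. D a v = 0" by (metis atMost_iff less_imp_le rho_simps(1))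
  next
    assume "\<forall>a<N. D a v = 0"
    then show "\<forall>x\<in>{..N}. rho n D T x v = 0" using T_eq_0 by (auto simp: le_less)
  qed
  finally have cocycle: "form0 v \<in> cyc (ce_sp n) (\<lambda>_. ce_d n J D T) 0 \<longleftrightarrow> (\<forall>a<N. D a v = 0)" for v .
  show ?thesis
  proof
    assume \<omega>: "\<omega> \<in> cyc (ce_sp n) (\<lambda>_. ce_d n J D T) 0"
    define v where "v = \<omega> []"
    have "\<omega> = form0 v"
      using \<omega> unfolding v_def by (intro alt_form_0_eq[of "Suc N"]) (simp add: cyc_def ce_sp_def)
    with \<omega> cocycle show "\<exists>v. \<omega> = form0 v \<and> (\<forall>a<N. D a v = 0)" by blast
  qed (use cocycle in blast)
qed

lemma ce_cocycle_cochain1_iff: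
  "cochain1 N w s \<in> cyc (ce_sp n) (\<lambda>_. ce_d n J D T) 1 \<longleftrightarrow> (\<forall>a<N. \<forall>b<N. eth1 D w a b = J a b *\<^sub>R s)"
proof -
  have "cochain1 N w s \<in> cyc (ce_sp n) (\<lambda>_. ce_d n J D T) 1 \<longleftrightarrow>
      (\<forall>a<N. \<forall>b<N. eth1 D w a b = J a b *\<^sub>R s) \<and> (\<forall>a<N. T (w a) = D a s)"
    by (simp add: cyc_def ce_sp_def alt_form_cochain1[simplified] ce_d_cochain1 fun_eq_iff[symmetric] cochain2_eq_0_iff)
  moreover have "T (w c) = D c s" if "\<forall>a<N. \<forall>b<N. eth1 D w a b = J a b *\<^sub>R s" "c < N" for c
    using centre_part_if_exact[where W="\<lambda>_ _. 0" and \<psi>="\<lambda>_. 0" and \<phi>="- s"] that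
    by (simp add: eth2_def jwedge1_def)
  ultimately show ?thesis
    by blast
qed

lemma ce_cocycle_1_iff:
  "\<omega> \<in> cyc (ce_sp n) (\<lambda>_. ce_d n J D T) 1 \<longleftrightarrow>
     (\<exists>w s. \<omega> = cochain1 N w s \<and> (\<forall>a<N. \<forall>b<N. eth1 D w a b = J a b *\<^sub>R s))"
proof
  assume \<omega>: "\<omega> \<in> cyc (ce_sp n) (\<lambda>_. ce_d n J D T) 1"
  define w s where "w = (\<lambda>a. \<omega> [a])" and "s = \<omega> [N]"
  have "\<omega> = cochain1 N w s"
    using \<omega> unfolding w_def s_def by (intro alt_form_1_cochain1) (simp add: cyc_def ce_sp_def)
  with \<omega> ce_cocycle_cochain1_iff show "\<exists>w s. \<omega> = cochain1 N w s \<and> (\<forall>a<N. \<forall>b<N. eth1 D w a b = J a b *\<^sub>R s)"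
    by blast
qed (use ce_cocycle_cochain1_iff in blast)

lemma ce_d_cochain2_eq_0_iff:
  assumes anti: "\<And>a b. a < N \<Longrightarrow> b < N \<Longrightarrow> W a b = - W b a"
  shows "ce_d n J D T (cochain2 N W \<psi>) = (\<lambda>_. 0) \<longleftrightarrow>
    (\<forall>a<N. \<forall>b<N. \<forall>c<N. eth2 D W a b c = jwedge1 J \<psi> a b c) \<and> (\<forall>a<N. \<forall>b<N. eth1 D \<psi> a b = T (W a b))"
    (is "_ \<longleftrightarrow> ?closed \<and> ?centre")
proof -
  let ?F = "\<lambda>x y z. ce_d n J D T (cochain2 N W \<psi>) [x, y, z]"
  have F_eval:
    "\<And>a b c. a < N \<Longrightarrow> b < N \<Longrightarrow> c < N \<Longrightarrow> ?F a b c = eth2 D W a b c - jwedge1 J \<psi> a b c"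
    "\<And>a b. a < N \<Longrightarrow> b < N \<Longrightarrow> ?F a b N = T (W a b) - eth1 D \<psi> a b"
    "\<And>a c. a < N \<Longrightarrow> c < N \<Longrightarrow> ?F a N c = eth1 D \<psi> a c - T (W a c)"
    "\<And>b c. b < N \<Longrightarrow> c < N \<Longrightarrow> ?F N b c = T (W b c) - eth1 D \<psi> b c"
    "\<And>a. a < N \<Longrightarrow> ?F a N N = 0" "\<And>b. b < N \<Longrightarrow> ?F N b N = 0" "\<And>c. c < N \<Longrightarrow> ?F N N c = 0"
    "?F N N N = 0"
    by (simp_all add: ce_d_eval eth2_def eth1_def jwedge1_def rho_def Jh_def algebra_simps)
  have "ce_d n J D T (cochain2 N W \<psi>) = (\<lambda>_. 0) \<longleftrightarrow> (\<forall>x\<in>{..N}. \<forall>y\<in>{..N}. \<forall>z\<in>{..N}. ?F x y z = 0)"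
    by (simp add: ce_d_eq_0_iff[OF alt_form_cochain2[OF anti]] all_lists_length_3)
  also have "\<dots> \<longleftrightarrow> ?closed \<and> ?centre"
  proof
    assume "\<forall>x\<in>{..N}. \<forall>y\<in>{..N}. \<forall>z\<in>{..N}. ?F x y z = 0"
    then have "?F a b c = 0" "?F a b N = 0" if "a < N" "b < N" "c < N" for a b c
      using that by simp_all
    then show "?closed \<and> ?centre"
      using F_eval(1,2) by (metis eq_iff_diff_eq_0)
  next
    assume "?closed \<and> ?centre"
    then show "\<forall>x\<in>{..N}. \<forall>y\<in>{..N}. \<forall>z\<in>{..N}. ?F x y z = 0"
      by (auto simp: le_less F_eval)
  qed
  finally show ?thesis .
qed

lemma ce_cocycle_cochain2_iff:
  assumes anti: "\<And>a b. a < N \<Longrightarrow> b < N \<Longrightarrow> W a b = - W b a"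
  shows "cochain2 N W \<psi> \<in> cyc (ce_sp n) (\<lambda>_. ce_d n J D T) 2 \<longleftrightarrow>
    (\<forall>a<N. \<forall>b<N. \<forall>c<N. eth2 D W a b c = jwedge1 J \<psi> a b c)"
proof -
  have "cochain2 N W \<psi> \<in> cyc (ce_sp n) (\<lambda>_. ce_d n J D T) 2 \<longleftrightarrow> ce_d n J D T (cochain2 N W \<psi>) = (\<lambda>_. 0)"
    by (simp add: cyc_def ce_sp_def alt_form_cochain2[where W=W, OF anti] fun_eq_iff)
  also have "\<dots> \<longleftrightarrow> (\<forall>a<N. \<forall>b<N. \<forall>c<N. eth2 D W a b c = jwedge1 J \<psi> a b c)"
    using ce_d_cochain2_eq_0_iff[where W=W, OF anti] eth1_eq_T_if_eth2_eq_jwedge1[where \<tau>=W, OF anti]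
    by blast
  finally show ?thesis .
qed

lemma ce_cocycle_2_iff:
  "\<omega> \<in> cyc (ce_sp n) (\<lambda>_. ce_d n J D T) 2 \<longleftrightarrow>
     (\<exists>W \<psi>. \<omega> = cochain2 N W \<psi> \<and> (\<forall>a<N. \<forall>b<N. W a b = - W b a)
        \<and> (\<forall>a<N. \<forall>b<N. \<forall>c<N. eth2 D W a b c = jwedge1 J \<psi> a b c))"
proof
  assume \<omega>: "\<omega> \<in> cyc (ce_sp n) (\<lambda>_. ce_d n J D T) 2"
  then have alt: "alt_form (Suc N) 2 \<omega>"
    by (simp add: cyc_def ce_sp_def)
  define W \<psi> where "W = (\<lambda>a b. \<omega> [a, b])" and "\<psi> = (\<lambda>b. \<omega> [N, b])"
  have \<omega>W: "\<omega> = cochain2 N W \<psi>"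
    unfolding W_def \<psi>_def by (rule alt_form_2_cochain2[OF alt])
  have anti: "W a b = - W b a" for a b
    unfolding W_def by (rule alt_form_2_antisym[OF alt])
  have "\<forall>a<N. \<forall>b<N. \<forall>c<N. eth2 D W a b c = jwedge1 J \<psi> a b c"
    using \<omega> ce_cocycle_cochain2_iff[of W \<psi>, OF anti] by (simp add: \<omega>W)
  moreover have "\<forall>a<N. \<forall>b<N. W a b = - W b a"
    by (intro allI impI) (rule anti)
  ultimately show "\<exists>W \<psi>. \<omega> = cochain2 N W \<psi> \<and> (\<forall>a<N. \<forall>b<N. W a b = - W b a)
      \<and> (\<forall>a<N. \<forall>b<N. \<forall>c<N. eth2 D W a b c = jwedge1 J \<psi> a b c)"
    using \<omega>W by blast
next
  assume "\<exists>W \<psi>. \<omega> = cochain2 N W \<psi> \<and> (\<forall>a<N. \<forall>b<N. W a b = - W b a)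
      \<and> (\<forall>a<N. \<forall>b<N. \<forall>c<N. eth2 D W a b c = jwedge1 J \<psi> a b c)"
  then obtain W \<psi> where \<omega>W: "\<omega> = cochain2 N W \<psi>" and anti: "\<And>a b. a < N \<Longrightarrow> b < N \<Longrightarrow> W a b = - W b a"
    and "\<forall>a<N. \<forall>b<N. \<forall>c<N. eth2 D W a b c = jwedge1 J \<psi> a b c"
    by blast
  then show "\<omega> \<in> cyc (ce_sp n) (\<lambda>_. ce_d n J D T) 2"
    using ce_cocycle_cochain2_iff[of W \<psi>, OF anti] by simp
qed

lemma rd_simps:
  "rd n J D 0 = eth n D" "rd n J D 1 \<omega> = tf_part n J 2 (eth n D \<omega>)" "rd n J D 2 \<omega> = tf_part n J 3 (eth n D \<omega>)"
  by (simp_all add: rd_def fun_eq_iff numeral_2_eq_2 numeral_3_eq_3)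

lemma trace_free_low: "trace_free n J 0 \<omega>" "trace_free n J 1 \<omega>"
  by (simp_all add: trace_free_def)

lemma alt_form_eth1: "alt_form N 2 (form2 N (eth1 D w))"
  by (rule alt_form_form2) (simp add: eth1_def)

lemma alt_form_eth2:
  assumes anti: "\<And>a b. a < N \<Longrightarrow> b < N \<Longrightarrow> W a b = - W b a"
  shows "alt_form N 3 (form3 N (eth2 D W))"
proof (rule alt_form_form3)
  fix a b c assume abc: "a < N" "b < N" "c < N"
  show "eth2 D W a b c = - eth2 D W b a c"
    using abc anti[of b a] by (simp add: eth2_def)
  show "eth2 D W a b c = - eth2 D W a c b"
    using abc anti[of c b] by (simp add: eth2_def)
  show "eth2 D W a b c = - eth2 D W c b a"
    using abc anti[of c b] anti[of c a] anti[of b a] by (simp add: eth2_def)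
qed

lemma rsp_cocycle_0_iff:
  "\<omega> \<in> cyc (rsp n J) (rd n J D) 0 \<longleftrightarrow> (\<exists>v. \<omega> = form0 v \<and> (\<forall>a<N. D a v = 0))"
proof -
  have "form0 v \<in> cyc (rsp n J) (rd n J D) 0 \<longleftrightarrow> (\<forall>a<N. D a v = 0)" for v
    using form1_eq_iff[of N "\<lambda>a. D a v" "\<lambda>_. 0"]
    by (simp add: cyc_def rsp_def rd_simps alt_form_form0 trace_free_low eth_form0 form_zero fun_eq_iff[symmetric])
  note cocycle = this
  show ?thesis
  proof
    assume \<omega>: "\<omega> \<in> cyc (rsp n J) (rd n J D) 0"
    define v where "v = \<omega> []"
    have "\<omega> = form0 v"
      using \<omega> unfolding v_def by (intro alt_form_0_eq[of N]) (simp add: cyc_def rsp_def)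
    with \<omega> cocycle show "\<exists>v. \<omega> = form0 v \<and> (\<forall>a<N. D a v = 0)" by blast
  qed (use cocycle in blast)
qed

lemma rsp_cocycle_1_iff:
  "\<omega> \<in> cyc (rsp n J) (rd n J D) 1 \<longleftrightarrow>
     (\<exists>w s. \<omega> = form1 N w \<and> (\<forall>a<N. \<forall>b<N. eth1 D w a b = J a b *\<^sub>R s))"
proof -
  have "form1 N w \<in> cyc (rsp n J) (rd n J D) 1 \<longleftrightarrow> (\<exists>s. \<forall>a<N. \<forall>b<N. eth1 D w a b = J a b *\<^sub>R s)" for w
  proof -
    have "form1 N w \<in> cyc (rsp n J) (rd n J D) 1 \<longleftrightarrow> tf_part n J 2 (form2 N (eth1 D w)) = (\<lambda>_. 0)"
      by (simp add: cyc_def rsp_def rd_simps[simplified] alt_form_form1[simplified] trace_free_low[simplified]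
          eth_form1 fun_eq_iff[symmetric])
    also have "\<dots> \<longleftrightarrow> (\<exists>s. form2 N (eth1 D w) = jwedge n J (form0 s))"
      by (rule tf_part_2_eq_0_iff[OF alt_form_eth1])
    also have "\<dots> \<longleftrightarrow> (\<exists>s. \<forall>a<N. \<forall>b<N. eth1 D w a b = J a b *\<^sub>R s)"
      by (simp add: jwedge_form0 form2_eq_iff)
    finally show ?thesis .
  qed
  note cocycle = this
  show ?thesis
  proof
    assume \<omega>: "\<omega> \<in> cyc (rsp n J) (rd n J D) 1"
    define w where "w = (\<lambda>a. \<omega> [a])"
    have "\<omega> = form1 N w"
      using \<omega> unfolding w_def by (intro alt_form_1_eq) (simp add: cyc_def rsp_def)
    with \<omega> cocycle show "\<exists>w s. \<omega> = form1 N w \<and> (\<forall>a<N. \<forall>b<N. eth1 D w a b = J a b *\<^sub>R s)" by blast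
  qed (use cocycle in blast)
qed

lemma rsp_cocycle_form2_iff:
  assumes anti: "\<And>a b. a < N \<Longrightarrow> b < N \<Longrightarrow> W a b = - W b a"
  shows "form2 N W \<in> cyc (rsp n J) (rd n J D) 2 \<longleftrightarrow>
    trace_free n J 2 (form2 N W) \<and> (\<exists>u. \<forall>a<N. \<forall>b<N. \<forall>c<N. eth2 D W a b c = jwedge1 J u a b c)"
proof -
  have "form2 N W \<in> cyc (rsp n J) (rd n J D) 2 \<longleftrightarrow>
      trace_free n J 2 (form2 N W) \<and> tf_part n J 3 (form3 N (eth2 D W)) = (\<lambda>_. 0)"
    by (simp add: cyc_def rsp_def rd_simps alt_form_form2[OF anti] eth_form2 fun_eq_iff[symmetric])
  also have "tf_part n J 3 (form3 N (eth2 D W)) = (\<lambda>_. 0) \<longleftrightarrow> (\<exists>u. form3 N (eth2 D W) = jwedge n J (form1 N u))"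
    by (rule tf_part_3_eq_0_iff[OF alt_form_eth2[OF anti]])
  also have "(\<exists>u. form3 N (eth2 D W) = jwedge n J (form1 N u))
      \<longleftrightarrow> (\<exists>u. \<forall>a<N. \<forall>b<N. \<forall>c<N. eth2 D W a b c = jwedge1 J u a b c)"
    by (simp add: jwedge_form1 form3_eq_iff)
  finally show ?thesis .
qed

lemma rsp_cocycle_2_iff:
  "\<omega> \<in> cyc (rsp n J) (rd n J D) 2 \<longleftrightarrow>
     (\<exists>W u. \<omega> = form2 N W \<and> (\<forall>a<N. \<forall>b<N. W a b = - W b a) \<and> trace_free n J 2 \<omega>
        \<and> (\<forall>a<N. \<forall>b<N. \<forall>c<N. eth2 D W a b c = jwedge1 J u a b c))"
proof
  assume \<omega>: "\<omega> \<in> cyc (rsp n J) (rd n J D) 2"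
  then have alt: "alt_form N 2 \<omega>"
    by (simp add: cyc_def rsp_def)
  define W where "W = (\<lambda>a b. \<omega> [a, b])"
  have \<omega>W: "\<omega> = form2 N W"
    unfolding W_def by (rule alt_form_2_eq[OF alt])
  have anti: "W a b = - W b a" for a b
    unfolding W_def by (rule alt_form_2_antisym[OF alt])
  have "form2 N W \<in> cyc (rsp n J) (rd n J D) 2"
    using \<omega> \<omega>W by simp
  then obtain u where "trace_free n J 2 (form2 N W)" "\<forall>a<N. \<forall>b<N. \<forall>c<N. eth2 D W a b c = jwedge1 J u a b c"
    using rsp_cocycle_form2_iff[of W, OF anti] by blast
  moreover have "\<forall>a<N. \<forall>b<N. W a b = - W b a"
    by (intro allI impI) (rule anti)
  ultimately show "\<exists>W u. \<omega> = form2 N W \<and> (\<forall>a<N. \<forall>b<N. W a b = - W b a)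
      \<and> trace_free n J 2 \<omega> \<and> (\<forall>a<N. \<forall>b<N. \<forall>c<N. eth2 D W a b c = jwedge1 J u a b c)"
    using \<omega>W by blast
next
  assume "\<exists>W u. \<omega> = form2 N W \<and> (\<forall>a<N. \<forall>b<N. W a b = - W b a)
      \<and> trace_free n J 2 \<omega> \<and> (\<forall>a<N. \<forall>b<N. \<forall>c<N. eth2 D W a b c = jwedge1 J u a b c)"
  then obtain W u where \<omega>W: "\<omega> = form2 N W" and anti: "\<And>a b. a < N \<Longrightarrow> b < N \<Longrightarrow> W a b = - W b a"
    and "trace_free n J 2 \<omega>" "\<forall>a<N. \<forall>b<N. \<forall>c<N. eth2 D W a b c = jwedge1 J u a b c"
    by blast
  with rsp_cocycle_form2_iff[of W, OF anti] have "form2 N W \<in> cyc (rsp n J) (rd n J D) 2"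
    by blast
  then show "\<omega> \<in> cyc (rsp n J) (rd n J D) 2"
    by (simp add: \<omega>W)
qed

section \<open>The isomorphisms in degrees 0, 1 and 2\<close>

lemma quot_iso_degree_0:
  "quot_iso (cyc (ce_sp n) (\<lambda>_. ce_d n J D T) 0) (bdry (ce_sp n) (\<lambda>_. ce_d n J D T) 0)
     (cyc (rsp n J) (rd n J D) 0) (bdry (rsp n J) (rd n J D) 0)"
proof -
  have "cyc (ce_sp n) (\<lambda>_. ce_d n J D T) 0 = cyc (rsp n J) (rd n J D) 0"
    by (auto simp: ce_cocycle_0_iff rsp_cocycle_0_iff)
  then show ?thesis
    unfolding quot_iso_def bdry_def by (intro exI[of _ "\<lambda>x. x"]) force
qed

lemma ce_bdry_1: "bdry (ce_sp n) (\<lambda>_. ce_d n J D T) 1 = range (\<lambda>v. cochain1 N (\<lambda>a. D a v) (T v))"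
  by (simp add: bdry_def ce_sp_def alt_forms_0 image_image ce_d_form0)

lemma rsp_bdry_1: "bdry (rsp n J) (rd n J D) 1 = range (\<lambda>v. form1 N (\<lambda>a. D a v))"
  by (simp add: bdry_def rsp_def rd_simps trace_free_low alt_forms_0 image_image eth_form0)

lemma restrict1_surj:
  assumes "z \<in> cyc (rsp n J) (rd n J D) 1"
  shows "\<exists>x\<in>cyc (ce_sp n) (\<lambda>_. ce_d n J D T) 1. (\<lambda>i. z i - restrict1 N x i) \<in> bdry (rsp n J) (rd n J D) 1"
proof -
  obtain w s where z: "z = form1 N w" and closed: "\<forall>a<N. \<forall>b<N. eth1 D w a b = J a b *\<^sub>R s"
    using assms unfolding rsp_cocycle_1_iff by blast
  have "cochain1 N w s \<in> cyc (ce_sp n) (\<lambda>_. ce_d n J D T) 1"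
    unfolding ce_cocycle_1_iff using closed by blast
  moreover have "form1 N (\<lambda>a. D a 0) = (\<lambda>_. 0)"
    using form1_eq_iff[of N "\<lambda>a. D a 0" "\<lambda>_. 0"] form_zero(1)[of N] by simp
  then have "(\<lambda>i. z i - restrict1 N (cochain1 N w s) i) = form1 N (\<lambda>a. D a 0)"
    by (simp add: z restrict1_cochain1)
  ultimately show ?thesis
    unfolding rsp_bdry_1 by blast
qed

lemma restrict1_inj:
  assumes "x \<in> cyc (ce_sp n) (\<lambda>_. ce_d n J D T) 1" and "restrict1 N x \<in> bdry (rsp n J) (rd n J D) 1"
  shows "x \<in> bdry (ce_sp n) (\<lambda>_. ce_d n J D T) 1"
proof -
  obtain w s v where x: "x = cochain1 N w s" and closed: "\<forall>a<N. \<forall>b<N. eth1 D w a b = J a b *\<^sub>R s"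
    and "form1 N w = form1 N (\<lambda>a. D a v)"
    using assms unfolding ce_cocycle_1_iff rsp_bdry_1 by (auto simp: restrict1_cochain1)
  then have w: "w a = D a v" if "a < N" for a
    using that by (simp add: form1_eq_iff)
  obtain a b where ab: "a < N" "b < N" "J a b \<noteq> 0"
    by (rule J_nonzero)
  have "J a b *\<^sub>R s = eth1 D w a b"
    using closed ab by simp
  also have "\<dots> = D a (D b v) - D b (D a v)"
    using ab by (simp add: eth1_def w)
  also have "\<dots> = J a b *\<^sub>R T v"
    using rep_bracket ab by simp
  finally have "s = T v"
    using ab by simp
  then have "x = cochain1 N (\<lambda>a. D a v) (T v)"
    by (simp add: x cochain1_eq_iff w)
  then show ?thesis
    unfolding ce_bdry_1 by simp
qed

lemma quot_iso_degree_1: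
  "quot_iso (cyc (ce_sp n) (\<lambda>_. ce_d n J D T) 1) (bdry (ce_sp n) (\<lambda>_. ce_d n J D T) 1)
     (cyc (rsp n J) (rd n J D) 1) (bdry (rsp n J) (rd n J D) 1)"
  unfolding quot_iso_def
proof (intro exI[of _ "restrict1 N"] conjI ballI allI impI)
  show "restrict1 N (\<lambda>i. x i + y i) = (\<lambda>i. restrict1 N x i + restrict1 N y i)"
    and "restrict1 N (\<lambda>i. c *\<^sub>R x i) = (\<lambda>i. c *\<^sub>R restrict1 N x i)" for x y :: "nat list \<Rightarrow> 'v" and c
    by (simp_all add: restrict1_def form1_add form1_scale)
  show "restrict1 N ` cyc (ce_sp n) (\<lambda>_. ce_d n J D T) 1 \<subseteq> cyc (rsp n J) (rd n J D) 1"
    by (auto simp: ce_cocycle_1_iff[simplified] rsp_cocycle_1_iff[simplified] restrict1_cochain1; blast)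
  show "restrict1 N ` bdry (ce_sp n) (\<lambda>_. ce_d n J D T) 1 \<subseteq> bdry (rsp n J) (rd n J D) 1"
    unfolding ce_bdry_1 rsp_bdry_1 by (auto simp: restrict1_cochain1)
qed (use restrict1_surj restrict1_inj in blast)+

lemma alt_form_restrict2:
  assumes "x \<in> cyc (ce_sp n) (\<lambda>_. ce_d n J D T) 2"
  shows "alt_form N 2 (restrict2 N x)"
proof -
  from assms have "alt_form (Suc N) 2 x"
    by (simp add: cyc_def ce_sp_def)
  then show ?thesis
    unfolding restrict2_def by (rule alt_form_form2[OF alt_form_2_antisym])
qed

lemma restrict2_cocycle:
  assumes "x \<in> cyc (ce_sp n) (\<lambda>_. ce_d n J D T) 2"
  shows "tf_part n J 2 (restrict2 N x) \<in> cyc (rsp n J) (rd n J D) 2"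
proof -
  obtain W \<psi> where x: "x = cochain2 N W \<psi>" and anti: "\<forall>a<N. \<forall>b<N. W a b = - W b a"
    and closed: "\<forall>a<N. \<forall>b<N. \<forall>c<N. eth2 D W a b c = jwedge1 J \<psi> a b c"
    using assms unfolding ce_cocycle_2_iff by blast
  have anti': "\<And>a b. a < N \<Longrightarrow> b < N \<Longrightarrow> W a b = - W b a"
    using anti by blast
  obtain s where tf: "tf_part n J 2 (form2 N W) = form2 N (\<lambda>a b. W a b - J a b *\<^sub>R s)"
    by (rule tf_part_form2[OF anti'])
  have "trace_free n J 2 (tf_part n J 2 (form2 N W))"
    by (simp add: trace_free_tf_part alt_form_form2[of N W, OF anti'])
  moreover have "\<forall>a<N. \<forall>b<N. W a b - J a b *\<^sub>R s = - (W b a - J b a *\<^sub>R s)"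
  proof (intro allI impI)
    fix a b assume "a < N" "b < N"
    then show "W a b - J a b *\<^sub>R s = - (W b a - J b a *\<^sub>R s)"
      using anti'[of a b] J_antisym[of a b] by simp
  qed
  moreover have "eth2 D (\<lambda>a b. W a b - J a b *\<^sub>R s) a b c = jwedge1 J (\<lambda>c. \<psi> c - D c s) a b c"
    if "a < N" "b < N" "c < N" for a b c
  proof -
    have "eth2 D (\<lambda>a b. W a b - J a b *\<^sub>R s) a b c = eth2 D W a b c - eth2 D (\<lambda>a b. J a b *\<^sub>R s) a b c"
      using that by (simp add: eth2_def algebra_simps)
    also have "\<dots> = jwedge1 J (\<lambda>c. \<psi> c - D c s) a b c"
      using that closed by (simp add: eth2_J jwedge1_diff)
    finally show ?thesis .
  qed
  ultimately show ?thesis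
    unfolding x restrict2_cochain2 rsp_cocycle_2_iff tf by blast
qed

lemma restrict2_coboundary:
  assumes "x \<in> bdry (ce_sp n) (\<lambda>_. ce_d n J D T) 2"
  shows "tf_part n J 2 (restrict2 N x) \<in> bdry (rsp n J) (rd n J D) 2"
proof -
  have "bdry (ce_sp n) (\<lambda>_. ce_d n J D T) 2 = ce_d n J D T ` ce_sp n 1"
    by (simp add: bdry_def)
  then obtain \<eta> where \<eta>: "alt_form (Suc N) 1 \<eta>" and x: "x = ce_d n J D T \<eta>"
    using assms unfolding ce_sp_def by blast
  define w s where "w = (\<lambda>a. \<eta> [a])" and "s = \<eta> [N]"
  have "x = cochain2 N (\<lambda>a b. eth1 D w a b - J a b *\<^sub>R s) (\<lambda>b. T (w b) - D b s)"
    unfolding x w_def s_def by (subst alt_form_1_cochain1[OF \<eta>]) (rule ce_d_cochain1)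
  then have restr: "restrict2 N x = form2 N (\<lambda>a b. eth1 D w a b - J a b *\<^sub>R s)"
    by (simp add: restrict2_cochain2)
  have alt: "alt_form N 2 (form2 N (\<lambda>a b. eth1 D w a b - J a b *\<^sub>R s))"
  proof (rule alt_form_form2)
    fix a b assume "a < N" "b < N"
    then show "eth1 D w a b - J a b *\<^sub>R s = - (eth1 D w b a - J b a *\<^sub>R s)"
      using J_antisym[of a b] by (simp add: eth1_def)
  qed
  have "form2 N (\<lambda>a b. eth1 D w a b - J a b *\<^sub>R s) xs = form2 N (eth1 D w) xs + jwedge n J (form0 (- s)) xs"
    for xs
    by (auto simp: jwedge_form0 form2_def split: list.split)
  then have "\<exists>\<beta>. alt_form N (2 - 2) \<beta> \<and>
      (\<forall>xs. form2 N (\<lambda>a b. eth1 D w a b - J a b *\<^sub>R s) xs = form2 N (eth1 D w) xs + jwedge n J \<beta> xs)"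
    by (intro exI[of _ "form0 (- s)"]) (simp add: alt_form_form0)
  then have "tf_part n J 2 (restrict2 N x) = tf_part n J 2 (form2 N (eth1 D w))"
    unfolding restr using tf_part_eq_iff[of 2, OF _ alt alt_form_eth1] by simp
  also have "\<dots> = rd n J D 1 (form1 N w)"
    by (simp add: rd_simps[simplified] eth_form1)
  moreover have "form1 N w \<in> rsp n J 1"
    unfolding rsp_def using alt_form_form1 trace_free_low by blast
  moreover have "bdry (rsp n J) (rd n J D) 2 = rd n J D 1 ` rsp n J 1"
    by (simp add: bdry_def)
  ultimately show ?thesis
    by simp
qed

lemma zero_in_rsp_bdry_2: "(\<lambda>_. 0) \<in> bdry (rsp n J) (rd n J D) 2"
proof -
  have "eth n D (form1 N (\<lambda>_. 0)) = form2 N (eth1 D (\<lambda>_. 0))"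
    by (rule eth_form1)
  also have "\<dots> = form2 N (\<lambda>_ _. 0)"
    by (simp add: form2_eq_iff eth1_def)
  finally have "eth n D (\<lambda>_. 0) = (\<lambda>_. 0)"
    by (simp add: form_zero)
  then have "rd n J D 1 (\<lambda>_. 0) = (\<lambda>_. 0)"
    using tf_part_trace_free[of 2 "\<lambda>_. 0"] by (simp add: rd_simps[simplified] alt_form_zero trace_free_zero)
  moreover have "(\<lambda>_. 0) \<in> rsp n J 1"
    unfolding rsp_def using alt_form_zero trace_free_zero by blast
  moreover have "bdry (rsp n J) (rd n J D) 2 = rd n J D 1 ` rsp n J 1"
    by (simp add: bdry_def)
  ultimately show ?thesis
    by (metis image_eqI)
qed

lemma restrict2_surj:
  assumes "z \<in> cyc (rsp n J) (rd n J D) 2"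
  shows "\<exists>x\<in>cyc (ce_sp n) (\<lambda>_. ce_d n J D T) 2.
    (\<lambda>i. z i - tf_part n J 2 (restrict2 N x) i) \<in> bdry (rsp n J) (rd n J D) 2"
proof -
  obtain W u where z: "z = form2 N W" and anti: "\<forall>a<N. \<forall>b<N. W a b = - W b a"
    and tf: "trace_free n J 2 z" and closed: "\<forall>a<N. \<forall>b<N. \<forall>c<N. eth2 D W a b c = jwedge1 J u a b c"
    using assms unfolding rsp_cocycle_2_iff by blast
  have "cochain2 N W u \<in> cyc (ce_sp n) (\<lambda>_. ce_d n J D T) 2"
    unfolding ce_cocycle_2_iff by (intro exI[of _ W] exI[of _ u]) (use anti closed in blast)
  moreover have "tf_part n J 2 (restrict2 N (cochain2 N W u)) = z"
  proof -
    have "alt_form N 2 z"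
      unfolding z by (rule alt_form_form2) (use anti in blast)
    then show ?thesis
      using tf_part_trace_free[of 2 z] tf by (simp add: restrict2_cochain2 flip: z)
  qed
  ultimately show ?thesis
    using zero_in_rsp_bdry_2 by (intro bexI[of _ "cochain2 N W u"]) simp_all
qed

lemma restrict2_inj:
  assumes x: "x \<in> cyc (ce_sp n) (\<lambda>_. ce_d n J D T) 2"
    and bd: "tf_part n J 2 (restrict2 N x) \<in> bdry (rsp n J) (rd n J D) 2"
  shows "x \<in> bdry (ce_sp n) (\<lambda>_. ce_d n J D T) 2"
proof -
  obtain W \<psi> where xW: "x = cochain2 N W \<psi>" and anti: "\<forall>a<N. \<forall>b<N. W a b = - W b a"
    and closed: "\<forall>a<N. \<forall>b<N. \<forall>c<N. eth2 D W a b c = jwedge1 J \<psi> a b c"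
    using x unfolding ce_cocycle_2_iff by blast
  have "bdry (rsp n J) (rd n J D) 2 = rd n J D 1 ` rsp n J 1"
    by (simp add: bdry_def)
  with bd obtain \<omega> where \<omega>: "\<omega> \<in> rsp n J 1" and eq: "tf_part n J 2 (restrict2 N x) = rd n J D 1 \<omega>"
    by blast
  define w where "w = (\<lambda>a. \<omega> [a])"
  have \<omega>w: "\<omega> = form1 N w"
    using \<omega> unfolding w_def rsp_def by (intro alt_form_1_eq) simp
  have alt: "alt_form N 2 (form2 N W)"
    by (rule alt_form_form2) (use anti in blast)
  have "tf_part n J 2 (form2 N W) = tf_part n J 2 (form2 N (eth1 D w))"
    using eq by (simp add: xW restrict2_cochain2 \<omega>w rd_simps[simplified] eth_form1)
  then obtain \<beta> where \<beta>: "alt_form N (2 - 2) \<beta>"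
    and decomp: "\<forall>xs. form2 N W xs = form2 N (eth1 D w) xs + jwedge n J \<beta> xs"
    using tf_part_eq_iff[of 2, OF _ alt alt_form_eth1] by auto
  define \<phi> where "\<phi> = \<beta> []"
  have \<beta>\<phi>: "form0 \<phi> = \<beta>"
    using \<beta> unfolding \<phi>_def by (intro alt_form_0_eq[symmetric]) simp
  have exact: "W a b = eth1 D w a b + J a b *\<^sub>R \<phi>" if "a < N" "b < N" for a b
    using decomp[rule_format, of "[a, b]"] that by (simp add: \<beta>\<phi>[symmetric] jwedge_form0)
  have centre: "\<psi> c = T (w c) + D c \<phi>" if "c < N" for c
    by (rule centre_part_if_exact[OF exact closed[rule_format] that])
  have "x = ce_d n J D T (cochain1 N w (- \<phi>))"
    unfolding xW ce_d_cochain1 cochain2_eq_iff using exact centre by simp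
  moreover have "cochain1 N w (- \<phi>) \<in> ce_sp n 1"
    unfolding ce_sp_def using alt_form_cochain1 by blast
  moreover have "bdry (ce_sp n) (\<lambda>_. ce_d n J D T) 2 = ce_d n J D T ` ce_sp n 1"
    by (simp add: bdry_def)
  ultimately show ?thesis
    by blast
qed

lemma quot_iso_degree_2:
  "quot_iso (cyc (ce_sp n) (\<lambda>_. ce_d n J D T) 2) (bdry (ce_sp n) (\<lambda>_. ce_d n J D T) 2)
     (cyc (rsp n J) (rd n J D) 2) (bdry (rsp n J) (rd n J D) 2)"
  unfolding quot_iso_def
proof (intro exI[of _ "\<lambda>x. tf_part n J 2 (restrict2 N x)"] conjI ballI allI impI)
  fix x y assume "x \<in> cyc (ce_sp n) (\<lambda>_. ce_d n J D T) 2" "y \<in> cyc (ce_sp n) (\<lambda>_. ce_d n J D T) 2"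
  then show "tf_part n J 2 (restrict2 N (\<lambda>i. x i + y i))
      = (\<lambda>i. tf_part n J 2 (restrict2 N x) i + tf_part n J 2 (restrict2 N y) i)"
    using tf_part_add[of 2 "restrict2 N x" "restrict2 N y"] alt_form_restrict2
    by (simp add: restrict2_def form2_add)
next
  fix c x assume "x \<in> cyc (ce_sp n) (\<lambda>_. ce_d n J D T) 2"
  then show "tf_part n J 2 (restrict2 N (\<lambda>i. c *\<^sub>R x i)) = (\<lambda>i. c *\<^sub>R tf_part n J 2 (restrict2 N x) i)"
    using tf_part_scale[of 2 "restrict2 N x"] alt_form_restrict2
    by (simp add: restrict2_def form2_scale)
qed (use restrict2_cocycle restrict2_coboundary restrict2_surj restrict2_inj in blast)+

end

theorem proposition17:
  fixes n :: nat and J :: "nat \<Rightarrow> nat \<Rightarrow> real"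
    and D :: "nat \<Rightarrow> 'v::real_vector \<Rightarrow> 'v" and T :: "'v \<Rightarrow> 'v"
  assumes n3: "n \<ge> 3"
    and J_skew: "\<forall>a<2 * n. \<forall>b<2 * n. J a b = - J b a"
    and J_nondeg: "\<forall>x :: nat \<Rightarrow> real. (\<forall>b<2 * n. (\<Sum>a<2 * n. x a * J a b) = 0) \<longrightarrow> (\<forall>a<2 * n. x a = 0)"
    and D_lin: "\<forall>a<2 * n. linear (D a)"
    and T_lin: "linear T"
    and rep_bracket: "\<forall>a<2 * n. \<forall>b<2 * n. \<forall>v. D a (D b v) - D b (D a v) = J a b *\<^sub>R T v"
    and rep_centre: "\<forall>a<2 * n. \<forall>v. D a (T v) = T (D a v)"
  shows "\<forall>r\<le>2. quot_iso
            (cyc (ce_sp n) (\<lambda>_. ce_d n J D T) r) (bdry (ce_sp n) (\<lambda>_. ce_d n J D T) r)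
            (cyc (rsp n J) (rd n J D) r) (bdry (rsp n J) (rd n J D) r)"
proof -
  interpret heisenberg_rep n J D T
    unfolding heisenberg_rep_def using n3 J_skew J_nondeg D_lin T_lin rep_bracket by blast
  have "r = 0 \<or> r = 1 \<or> r = 2" if "r \<le> 2" for r :: nat
    using that by auto
  then show ?thesis
    using quot_iso_degree_0 quot_iso_degree_1 quot_iso_degree_2 by blast
qed

end
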